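(* A state over time function $\star$ satisfies axioms (T), (E), (P) and ($\hat{\mathrm{J}}$) if and only if there is, for each system $A$, a linear map $\Xi:\mathfrak{B}(A)\to\mathfrak{B}(A\otimes A')$ with $\Xi(\mathbb{1}_A)=0$, $F_{AA'}\Xi(\rho)F_{AA'}=\Xi(\rho)$ for all $\rho$, and $\mathrm{Tr}_A\circ\Xi=\mathrm{Tr}_{A'}\circ\Xi=0$, such that for all $\rho\in\mathfrak{S}(A)$ $$\mathrm{id}_{A'|A}\star\rho_A=\frac{1}{|A|}\Big(\mathrm{Tr}[\rho]F_{AA'}+\mathbb{1}_A\otimes\hat{\rho}_{A'}+\hat{\rho}_A\otimes\mathbb{1}_{A'}\Big)+\Xi(\rho),\qquad \hat{\rho}:=\rho-\frac{\mathrm{Tr}[\rho]}{|A|}\mathbb{1}_A,$$ and $\star$ is induced from this by $\mathcal{E}_{B|A}\star\rho_A=(\mathrm{id}_A\otimes\mathcal{E}_{B|A'})(\mathrm{id}_{A'|A}\star\rho_A)$ for all channels $\mathcal{E}_{B|A}$. The same statement holds with axiom (T) replaced by axiom (H) and the condition $F_{AA'}\Xi(\rho)F_{AA'}=\Xi(\rho)$ replaced by the condition that $\Xi$ is Hermitian-preserving.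
   Context: Systems are finite-dimensional Hilbert spaces; $\mathfrak{B}(A)$ linear operators, $\mathfrak{S}(A)$ density operators, $\mathfrak{C}(A,B)$ quantum channels (CPTP maps $\mathfrak{B}(A)\to\mathfrak{B}(B)$). $|A|=\dim A$, $\mathbb{1}_A$ identity, $\pi_A=\mathbb{1}_A/|A|$, $A'$ a copy of $A$, $\mathrm{id}_{A'|A}$ identity channel, $F_{AA'}$ swap operator, $\mathcal{E}_{B|A'}$ the map $\mathcal{E}_{B|A}$ acting on $A'$. A map is Hermitian-preserving if it maps Hermitian operators to Hermitian operators. A state over time function assigns to all systems $A,B$ a map $\star:\mathfrak{C}(A,B)\times\mathfrak{S}(A)\to\mathfrak{B}(A\otimes B)$ with $\mathrm{Tr}_A[\mathcal{E}\star\rho]=\mathcal{E}(\rho)$, $\mathrm{Tr}_B[\mathcal{E}\star\rho]=\rho$, extended homogeneously by $(\lambda\mathcal{E})\star\rho=\mathcal{E}\star(\lambda\rho)=\lambda(\mathcal{E}\star\rho)$, $\lambda\in\mathbb{C}$. A quantum state over spacetime on $A\otimes E$ is a density operator or an operator of the form $\mathcal{F}\star\sigma$. (E): for all $A,B,E$, every quantum state over spacetime $\rho_{AE}$ and channel $\mathcal{E}_{B|A}$, an operator $\mathcal{E}_{B|A}\star\rho_{AE}$ on $A\otimes B\otimes E$ is defined with $\mathcal{I}_E[\mathcal{E}\star\rho_{AE}]=\mathcal{E}\star\mathcal{I}_E(\rho_{AE})$ for every completely positive trace-non-increasing $\mathcal{I}_E$ on $E$, and $\mathrm{Tr}_A[\mathcal{E}\star\rho_{AE}]=(\mathcal{E}\otimes\mathrm{id}_E)(\rho_{AE})$.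 (A state-linear $\star$ satisfies (E) with the subsystem action $\mathcal{E}\star\rho_{AE}:=((\mathcal{E}\star\cdot)\otimes\mathrm{id}_E)(\rho_{AE})$.) (P): $\mathrm{Tr}_B[\mathcal{F}_{C|B}\star(\mathcal{E}_{B|A}\star\rho_A)]=(\mathcal{F}\circ\mathcal{E})_{C|A}\star\rho_A$ for all channels $\mathcal{E}_{B|A},\mathcal{F}_{C|B}$ and states $\rho_A$, with $\mathcal{F}_{C|B}\star(\cdot)$ acting on the $B$-part (spectator $A$). (T): $F_{AB}(\mathrm{id}_{B|A}\star\rho_A)F_{AB}=\mathrm{id}_{B|A}\star\rho_A$ for every $A$, $B$ a copy of $A$, $\rho_A\in\mathfrak{S}(A)$. (H): $\mathcal{E}_{B|A}\star\rho_A$ is Hermitian for every channel and state. ($\hat{\mathrm{J}}$): for every full system $A$ (not required for subspaces of larger systems regarded as systems) and every channel $\mathcal{E}_{B|A}$: $\mathcal{E}_{B|A}\star\pi_A=|A|^{-1}(\mathrm{id}_A\otimes\mathcal{E}_{B|A'})(F_{AA'})$. *)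

theory Defs
  imports "Jordan_Normal_Form.Matrix"
begin

text \<open>A system is represented by its dimension n (n > 0); operators on it are
complex n x n matrices. The tensor product of systems of dimensions n and m has
dimension n*m, with basis index (i,j) encoded as i*m+j (first factor = high digit).\<close>

type_synonym cmat = "complex mat"
type_synonym cmap = "complex mat \<Rightarrow> complex mat"

definition kron :: "nat \<Rightarrow> nat \<Rightarrow> cmat \<Rightarrow> cmat \<Rightarrow> cmat" where
  "kron n m X Y = mat (n*m) (n*m)
     (\<lambda>(r,c). X $$ (r div m, c div m) * Y $$ (r mod m, c mod m))"

definition ptr1 :: "nat \<Rightarrow> nat \<Rightarrow> cmat \<Rightarrow> cmat" where
  "ptr1 n m Z = mat m m (\<lambda>(j,l). \<Sum>i<n. Z $$ (i*m+j, i*m+l))"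

definition ptr2 :: "nat \<Rightarrow> nat \<Rightarrow> cmat \<Rightarrow> cmat" where
  "ptr2 n m Z = mat n n (\<lambda>(i,k). \<Sum>j<m. Z $$ (i*m+j, k*m+j))"

definition swap_op :: "nat \<Rightarrow> cmat" where
  "swap_op n = mat (n*n) (n*n)
     (\<lambda>(r,c). if r div n = c mod n \<and> r mod n = c div n then 1 else 0)"

text \<open>Canonical reordering isomorphism B(n (x) m) -> B(m (x) n) (conjugation by the swap
of tensor factors).\<close>
definition reorder :: "nat \<Rightarrow> nat \<Rightarrow> cmat \<Rightarrow> cmat" where
  "reorder n m X = mat (m*n) (m*n)
     (\<lambda>(r,c). X $$ ((r mod n)*m + r div n, (c mod n)*m + c div n))"

text \<open>(id_k (x) E)(X) for X on k (x) n, E a linear map B(n) -> B(m).\<close>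
definition app2 :: "nat \<Rightarrow> nat \<Rightarrow> nat \<Rightarrow> cmap \<Rightarrow> cmat \<Rightarrow> cmat" where
  "app2 k n m E X = mat (k*m) (k*m)
     (\<lambda>(r,c). (E (mat n n (\<lambda>(i,j). X $$ ((r div m)*n+i, (c div m)*n+j)))) $$ (r mod m, c mod m))"

text \<open>(E (x) id_k)(X) for X on n (x) k, E a linear map B(n) -> B(m).\<close>
definition app1 :: "nat \<Rightarrow> nat \<Rightarrow> nat \<Rightarrow> cmap \<Rightarrow> cmat \<Rightarrow> cmat" where
  "app1 n m k E X = mat (m*k) (m*k)
     (\<lambda>(r,c). (E (mat n n (\<lambda>(i,j). X $$ (i*k + r mod k, j*k + c mod k)))) $$ (r div k, c div k))"

definition mtrace :: "cmat \<Rightarrow> complex" where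
  "mtrace X = (\<Sum>i<dim_row X. X $$ (i,i))"

definition hermitian :: "nat \<Rightarrow> cmat \<Rightarrow> bool" where
  "hermitian n X \<longleftrightarrow> X \<in> carrier_mat n n \<and>
     (\<forall>i<n. \<forall>j<n. X $$ (j,i) = cnj (X $$ (i,j)))"

definition psd :: "nat \<Rightarrow> cmat \<Rightarrow> bool" where
  "psd n X \<longleftrightarrow> X \<in> carrier_mat n n \<and>
     (\<forall>v :: nat \<Rightarrow> complex. let q = (\<Sum>i<n. \<Sum>j<n. cnj (v i) * X $$ (i,j) * v j)
        in Im q = 0 \<and> Re q \<ge> 0)"

definition density :: "nat \<Rightarrow> cmat \<Rightarrow> bool" where
  "density n \<rho> \<longleftrightarrow> psd n \<rho> \<and> mtrace \<rho> = 1"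

definition linear_on :: "nat \<Rightarrow> nat \<Rightarrow> cmap \<Rightarrow> bool" where
  "linear_on n m E \<longleftrightarrow>
     (\<forall>X\<in>carrier_mat n n. E X \<in> carrier_mat m m) \<and>
     (\<forall>X\<in>carrier_mat n n. \<forall>Y\<in>carrier_mat n n. E (X + Y) = E X + E Y) \<and>
     (\<forall>X\<in>carrier_mat n n. \<forall>c. E (c \<cdot>\<^sub>m X) = c \<cdot>\<^sub>m E X)"

definition completely_positive :: "nat \<Rightarrow> nat \<Rightarrow> cmap \<Rightarrow> bool" where
  "completely_positive n m E \<longleftrightarrow>
     (\<forall>k>0. \<forall>X. psd (k*n) X \<longrightarrow> psd (k*m) (app2 k n m E X))"

definition channel :: "nat \<Rightarrow> nat \<Rightarrow> cmap \<Rightarrow> bool" where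
  "channel n m E \<longleftrightarrow> linear_on n m E \<and> completely_positive n m E \<and>
     (\<forall>X\<in>carrier_mat n n. mtrace (E X) = mtrace X)"

definition cp_tni :: "nat \<Rightarrow> nat \<Rightarrow> cmap \<Rightarrow> bool" where
  "cp_tni n m E \<longleftrightarrow> linear_on n m E \<and> completely_positive n m E \<and>
     (\<forall>X. psd n X \<longrightarrow> Re (mtrace (E X)) \<le> Re (mtrace X))"

definition hermitian_preserving :: "nat \<Rightarrow> nat \<Rightarrow> cmap \<Rightarrow> bool" where
  "hermitian_preserving n m E \<longleftrightarrow> (\<forall>X. hermitian n X \<longrightarrow> hermitian m (E X))"

text \<open>star n m E \<rho> is E_{B|A} \<star> \<rho>_A for |A| = n, |B| = m, an operator on A (x) B.\<close>
type_synonym sotf = "nat \<Rightarrow> nat \<Rightarrow> cmap \<Rightarrow> cmat \<Rightarrow> cmat"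

definition state_over_time_function :: "sotf \<Rightarrow> bool" where
  "state_over_time_function star \<longleftrightarrow>
     (\<forall>n>0. \<forall>m>0. \<forall>E \<rho>. channel n m E \<and> density n \<rho> \<longrightarrow>
        star n m E \<rho> \<in> carrier_mat (n*m) (n*m) \<and>
        ptr1 n m (star n m E \<rho>) = E \<rho> \<and>
        ptr2 n m (star n m E \<rho>) = \<rho>)"

text \<open>Quantum states over spacetime on A (x) E (|A| = n, |E| = e): density operators, or
F \<star> \<sigma> with F a channel between the two factors (in either direction; for F_{A|E} the
result is reordered to A (x) E).\<close>
definition qsst :: "sotf \<Rightarrow> nat \<Rightarrow> nat \<Rightarrow> cmat \<Rightarrow> bool" where
  "qsst star n e X \<longleftrightarrow> density (n*e) X \<or>
     (\<exists>F \<sigma>. channel n e F \<and> density n \<sigma> \<and> X = star n e F \<sigma>) \<or>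
     (\<exists>F \<sigma>. channel e n F \<and> density e \<sigma> \<and> X = reorder e n (star e n F \<sigma>))"

text \<open>Axiom (E), for a given subsystem action ext: ext n m e E X is E_{B|A} \<star> X_{AE}
(|A| = n, |B| = m, |E| = e), an operator on A (x) B (x) E. It extends \<star> (trivial E).\<close>
definition axiom_E_with :: "sotf \<Rightarrow> (nat \<Rightarrow> nat \<Rightarrow> nat \<Rightarrow> cmap \<Rightarrow> cmat \<Rightarrow> cmat) \<Rightarrow> bool" where
  "axiom_E_with star ext \<longleftrightarrow>
     (\<forall>n>0. \<forall>m>0. \<forall>E \<rho>. channel n m E \<and> density n \<rho> \<longrightarrow> ext n m 1 E \<rho> = star n m E \<rho>) \<and>
     (\<forall>n>0. \<forall>m>0. \<forall>e>0. \<forall>E X. channel n m E \<and> qsst star n e X \<longrightarrow>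
        ext n m e E X \<in> carrier_mat (n*m*e) (n*m*e) \<and>
        (\<forall>e'>0. \<forall>I. cp_tni e e' I \<longrightarrow>
            app2 (n*m) e e' I (ext n m e E X) = ext n m e' E (app2 n e e' I X)) \<and>
        ptr1 n (m*e) (ext n m e E X) = app1 n m e E X)"

definition axiom_E :: "sotf \<Rightarrow> bool" where
  "axiom_E star \<longleftrightarrow> (\<exists>ext. axiom_E_with star ext)"

text \<open>Axiom (P), relative to the subsystem action ext from (E): F_{C|B} acts on the B part
of E_{B|A} \<star> \<rho>_A (regarded on B (x) A with spectator A); the result lives on B (x) C (x) A,
B is traced out and the remaining C (x) A is reordered to A (x) C.\<close>
definition axiom_P_with :: "sotf \<Rightarrow> (nat \<Rightarrow> nat \<Rightarrow> nat \<Rightarrow> cmap \<Rightarrow> cmat \<Rightarrow> cmat) \<Rightarrow> bool" where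
  "axiom_P_with star ext \<longleftrightarrow>
     (\<forall>n>0. \<forall>m>0. \<forall>k>0. \<forall>E F \<rho>. channel n m E \<and> channel m k F \<and> density n \<rho> \<longrightarrow>
        reorder k n (ptr1 m (k*n) (ext m k n F (reorder n m (star n m E \<rho>))))
          = star n k (F \<circ> E) \<rho>)"

definition axiom_EP :: "sotf \<Rightarrow> bool" where
  "axiom_EP star \<longleftrightarrow> (\<exists>ext. axiom_E_with star ext \<and> axiom_P_with star ext)"

definition axiom_T :: "sotf \<Rightarrow> bool" where
  "axiom_T star \<longleftrightarrow> (\<forall>n>0. \<forall>\<rho>. density n \<rho> \<longrightarrow>
     swap_op n * star n n id \<rho> * swap_op n = star n n id \<rho>)"

definition axiom_H :: "sotf \<Rightarrow> bool" where
  "axiom_H star \<longleftrightarrow> (\<forall>n>0. \<forall>m>0. \<forall>E \<rho>. channel n m E \<and> density n \<rho> \<longrightarrow>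
     hermitian (n*m) (star n m E \<rho>))"

definition axiom_Jhat :: "sotf \<Rightarrow> bool" where
  "axiom_Jhat star \<longleftrightarrow> (\<forall>n>0. \<forall>m>0. \<forall>E. channel n m E \<longrightarrow>
     star n m E ((1 / of_nat n) \<cdot>\<^sub>m 1\<^sub>m n) = (1 / of_nat n) \<cdot>\<^sub>m app2 n n m E (swap_op n))"

definition rho_hat :: "nat \<Rightarrow> cmat \<Rightarrow> cmat" where
  "rho_hat n \<rho> = \<rho> - (mtrace \<rho> / of_nat n) \<cdot>\<^sub>m 1\<^sub>m n"

definition id_star_form :: "nat \<Rightarrow> cmap \<Rightarrow> cmat \<Rightarrow> cmat" where
  "id_star_form n \<Xi> \<rho> =
     (1 / of_nat n) \<cdot>\<^sub>m (mtrace \<rho> \<cdot>\<^sub>m swap_op n + kron n n (1\<^sub>m n) (rho_hat n \<rho>)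
                          + kron n n (rho_hat n \<rho>) (1\<^sub>m n)) + \<Xi> \<rho>"

definition Xi_basic :: "(nat \<Rightarrow> cmap) \<Rightarrow> bool" where
  "Xi_basic \<Xi> \<longleftrightarrow> (\<forall>n>0. linear_on n (n*n) (\<Xi> n) \<and>
     \<Xi> n (1\<^sub>m n) = 0\<^sub>m (n*n) (n*n) \<and>
     (\<forall>X\<in>carrier_mat n n. ptr1 n n (\<Xi> n X) = 0\<^sub>m n n \<and> ptr2 n n (\<Xi> n X) = 0\<^sub>m n n))"

definition induced_by :: "sotf \<Rightarrow> (nat \<Rightarrow> cmap) \<Rightarrow> bool" where
  "induced_by star \<Xi> \<longleftrightarrow>
     (\<forall>n>0. \<forall>\<rho>. density n \<rho> \<longrightarrow> star n n id \<rho> = id_star_form n (\<Xi> n) \<rho>) \<and>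
     (\<forall>n>0. \<forall>m>0. \<forall>E \<rho>. channel n m E \<and> density n \<rho> \<longrightarrow>
        star n m E \<rho> = app2 n n m E (star n n id \<rho>))"

end

theory Submission
  imports Defs
begin

text \<open>
  Converse direction: given \<open>\<Xi>\<close>, the map \<open>Y \<mapsto> (id \<otimes> E)(id \<star> Y)\<close> is linear, so it also acts on
  the \<open>A\<close>-factor of bipartite operators; this action commutes with operations on the spectator
  and has partial trace \<open>E\<close>, which gives (E) and (P). (Jhat) holds because
  \<open>\<Xi>(\<pi>) = 0\<close>, (T) and (H) because the fixed part of \<open>id \<star> \<rho>\<close> is swap invariant and Hermitian.

  Direct direction: applying (E) to a state on \<open>A \<otimes> qubit\<close> that is block diagonal in the qubit
  shows that \<open>\<rho> \<mapsto> E \<star> \<rho>\<close> preserves mixtures, hence affine combinations of states. The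
  \<open>|A|\<^sup>2\<close> density matrices of \<open>herm_basis\<close> span all operators, with real coordinates summing to
  the trace for Hermitian ones, so \<open>id \<star> \<cdot>\<close> is the restriction of a linear map, and \<open>\<Xi>\<close> is
  this map minus the fixed part. Both have partial traces \<open>\<rho>\<close>, so those of \<open>\<Xi>\<close> vanish;
  \<open>\<Xi>(\<pi>) = 0\<close> by (Jhat); (P) for \<open>E \<circ> id\<close> yields \<open>E \<star> \<rho> = (id \<otimes> E)(id \<star> \<rho>)\<close>; and
  (T) resp. (H) on the basis make \<open>\<Xi>\<close> swap invariant resp. Hermitian-preserving.
\<close>

lemma mult_add_less_mult: "(R::nat) < k \<Longrightarrow> i < n \<Longrightarrow> R*n + i < k*n"
proof -
  assume "R < k" "i < n"
  then have "R*n + i < Suc R * n" by simp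
  also have "\<dots> \<le> k*n" using \<open>R < k\<close> by (intro mult_le_mono1) simp
  finally show ?thesis .
qed

lemma div_less_of_less_mult: "(r::nat) < k*n \<Longrightarrow> r div n < k"
  by (simp add: less_mult_imp_div_less)

lemma mod_less_of_less_mult: "(r::nat) < k*n \<Longrightarrow> r mod n < n"
  by (cases "n = 0") auto

lemma mult_add_div_eq [simp]: "(i::nat) < n \<Longrightarrow> (R*n + i) div n = R"
  and mult_add_mod_eq [simp]: "(i::nat) < n \<Longrightarrow> (R*n + i) mod n = i"
  by simp_all

lemma sum_lessThan_mult:
  fixes k m :: nat
  shows "(\<Sum>t<k*m. g t) = (\<Sum>r<k. \<Sum>u<m. g (r*m+u))"
proof -
  have "(\<Sum>u<m. g (r*m+u)) = sum g {r*m..<r*m+m}" for r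
    using sum.shift_bounds_nat_ivl[of g 0 "r*m" m] by (simp add: lessThan_atLeast0 add.commute)
  then show ?thesis by (simp add: sum.nat_group)
qed

definition mat_comb :: "nat \<Rightarrow> 'k set \<Rightarrow> ('k \<Rightarrow> complex) \<Rightarrow> ('k \<Rightarrow> cmat) \<Rightarrow> cmat" where
  "mat_comb d K c M = mat d d (\<lambda>(r,s). \<Sum>k\<in>K. c k * M k $$ (r,s))"

lemma mat_comb_carrier [simp]: "mat_comb d K c M \<in> carrier_mat d d"
  and mat_comb_dim [simp]: "dim_row (mat_comb d K c M) = d" "dim_col (mat_comb d K c M) = d"
  by (auto simp: mat_comb_def)

lemma mat_comb_index [simp]:
  "r < d \<Longrightarrow> s < d \<Longrightarrow> mat_comb d K c M $$ (r,s) = (\<Sum>k\<in>K. c k * M k $$ (r,s))"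
  by (simp add: mat_comb_def)

lemma mat_comb_cong:
  "(\<And>k. k \<in> K \<Longrightarrow> c k = c' k) \<Longrightarrow> (\<And>k. k \<in> K \<Longrightarrow> M k = M' k) \<Longrightarrow>
     mat_comb d K c M = mat_comb d K c' M'"
  unfolding mat_comb_def by (intro cong_mat refl) (auto intro!: sum.cong)

lemma mat_comb_empty: "mat_comb d {} c M = 0\<^sub>m d d"
  by (rule eq_matI) auto

lemma mat_comb_insert:
  assumes "finite K" "a \<notin> K" "M a \<in> carrier_mat d d"
  shows "mat_comb d (insert a K) c M = c a \<cdot>\<^sub>m M a + mat_comb d K c M"
  by (rule eq_matI) (use assms in auto)

lemma mat_comb_smult: "mat_comb d K (\<lambda>k. a * c k) M = a \<cdot>\<^sub>m mat_comb d K c M"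
  by (rule eq_matI) (auto simp: sum_distrib_left mult.assoc)

lemma linear_onD:
  assumes "linear_on n m E" "X \<in> carrier_mat n n"
  shows "E X \<in> carrier_mat m m"
    and "Y \<in> carrier_mat n n \<Longrightarrow> E (X + Y) = E X + E Y"
    and "E (c \<cdot>\<^sub>m X) = c \<cdot>\<^sub>m E X"
  using assms unfolding linear_on_def by blast+

lemma linear_on_zero:
  assumes "linear_on n m E"
  shows "E (0\<^sub>m n n) = 0\<^sub>m m m"
proof -
  have "E (0\<^sub>m n n) = E (0 \<cdot>\<^sub>m 0\<^sub>m n n)" by (metis smult_zero_mat)
  also have "\<dots> = 0 \<cdot>\<^sub>m E (0\<^sub>m n n)" by (rule linear_onD(3)[OF assms]) simp
  also have "\<dots> = 0\<^sub>m m m" using linear_onD(1)[OF assms zero_carrier_mat] by (intro eq_matI) auto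
  finally show ?thesis .
qed

lemma linear_on_diff:
  assumes E: "linear_on n m E" and X: "X \<in> carrier_mat n n" and Y: "Y \<in> carrier_mat n n"
  shows "E (X - Y) = E X - E Y"
proof -
  have "X - Y = X + (-1) \<cdot>\<^sub>m Y" using X Y by (intro eq_matI) auto
  then have "E (X - Y) = E X + (-1) \<cdot>\<^sub>m E Y" using X Y by (simp add: linear_onD[OF E])
  also have "\<dots> = E X - E Y"
    using linear_onD(1)[OF E X] linear_onD(1)[OF E Y] by (intro eq_matI) auto
  finally show ?thesis .
qed

lemma linear_on_mat_comb:
  assumes E: "linear_on n m E" and "finite K" and "\<And>k. k \<in> K \<Longrightarrow> M k \<in> carrier_mat n n"
  shows "E (mat_comb n K c M) = mat_comb m K c (\<lambda>k. E (M k))"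
  using assms(2,3)
proof (induction K rule: finite_induct)
  case empty
  then show ?case by (simp add: mat_comb_empty linear_on_zero[OF E])
next
  case (insert a K)
  have Ma: "M a \<in> carrier_mat n n" using insert by simp
  have "E (mat_comb n (insert a K) c M) = E (c a \<cdot>\<^sub>m M a + mat_comb n K c M)"
    using insert Ma by (simp add: mat_comb_insert)
  also have "\<dots> = c a \<cdot>\<^sub>m E (M a) + mat_comb m K c (\<lambda>k. E (M k))"
    using insert Ma by (simp add: linear_onD[OF E])
  also have "\<dots> = mat_comb m (insert a K) c (\<lambda>k. E (M k))"
    using insert linear_onD(1)[OF E Ma] by (simp add: mat_comb_insert)
  finally show ?case .
qed

lemma linear_on_add:
  assumes A: "linear_on n k A" and B: "linear_on n k B"
  shows "linear_on n k (\<lambda>Y. A Y + B Y)"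
  unfolding linear_on_def
proof (intro conjI ballI allI)
  fix X Y :: cmat assume X: "X \<in> carrier_mat n n" and Y: "Y \<in> carrier_mat n n"
  note cX = linear_onD(1)[OF A X] linear_onD(1)[OF B X]
    and cY = linear_onD(1)[OF A Y] linear_onD(1)[OF B Y]
  show "A X + B X \<in> carrier_mat k k" using cX by simp
  show "A (X + Y) + B (X + Y) = A X + B X + (A Y + B Y)"
    using cX cY by (simp add: linear_onD(2)[OF A X Y] linear_onD(2)[OF B X Y]) (intro eq_matI; simp)
  show "A (c \<cdot>\<^sub>m X) + B (c \<cdot>\<^sub>m X) = c \<cdot>\<^sub>m (A X + B X)" for c
    using cX by (simp add: linear_onD(3)[OF A X] linear_onD(3)[OF B X])
      (intro eq_matI; auto simp: algebra_simps)
qed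

lemma linear_on_diff_maps:
  assumes A: "linear_on n k A" and B: "linear_on n k B"
  shows "linear_on n k (\<lambda>Y. A Y - B Y)"
  unfolding linear_on_def
proof (intro conjI ballI allI)
  fix X Y :: cmat assume X: "X \<in> carrier_mat n n" and Y: "Y \<in> carrier_mat n n"
  note cX = linear_onD(1)[OF A X] linear_onD(1)[OF B X]
    and cY = linear_onD(1)[OF A Y] linear_onD(1)[OF B Y]
  show "A X - B X \<in> carrier_mat k k" using cX by (simp add: minus_carrier_mat)
  show "A (X + Y) - B (X + Y) = A X - B X + (A Y - B Y)"
    using cX cY by (simp add: linear_onD(2)[OF A X Y] linear_onD(2)[OF B X Y]) (intro eq_matI; simp)
  show "A (c \<cdot>\<^sub>m X) - B (c \<cdot>\<^sub>m X) = c \<cdot>\<^sub>m (A X - B X)" for c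
    using cX by (simp add: linear_onD(3)[OF A X] linear_onD(3)[OF B X])
      (intro eq_matI; auto simp: algebra_simps)
qed

definition mat_unit :: "nat \<Rightarrow> nat \<Rightarrow> nat \<Rightarrow> cmat" where
  "mat_unit n i j = mat n n (\<lambda>(a,b). if a = i \<and> b = j then 1 else 0)"

lemma mat_comb_mat_unit:
  assumes "X \<in> carrier_mat n n"
  shows "mat_comb n ({..<n} \<times> {..<n}) (\<lambda>(i,j). X $$ (i,j)) (\<lambda>(i,j). mat_unit n i j) = X"
proof (rule eq_matI)
  fix r s assume "r < dim_row X" "s < dim_col X"
  then have rs: "r < n" "s < n" using assms by auto
  have "(\<Sum>k\<in>{..<n} \<times> {..<n}. (case k of (i,j) \<Rightarrow> X $$ (i,j)) * (case k of (i,j) \<Rightarrow> mat_unit n i j) $$ (r,s))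
      = (\<Sum>k\<in>{(r,s)}. (case k of (i,j) \<Rightarrow> X $$ (i,j)) * (case k of (i,j) \<Rightarrow> mat_unit n i j) $$ (r,s))"
    by (rule sum.mono_neutral_right) (use rs in \<open>auto simp: mat_unit_def split: if_splits\<close>)
  then show "mat_comb n ({..<n} \<times> {..<n}) (\<lambda>(i,j). X $$ (i,j)) (\<lambda>(i,j). mat_unit n i j) $$ (r,s)
      = X $$ (r,s)"
    using rs by (simp add: mat_unit_def)
qed (use assms in auto)

lemma linear_on_index:
  assumes E: "linear_on n m E" and X: "X \<in> carrier_mat n n" and ab: "a < m" "b < m"
  shows "E X $$ (a,b) = (\<Sum>i<n. \<Sum>j<n. X $$ (i,j) * E (mat_unit n i j) $$ (a,b))"
proof -
  have "E X = mat_comb m ({..<n} \<times> {..<n}) (\<lambda>(i,j). X $$ (i,j))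
      (\<lambda>k. E (case k of (i,j) \<Rightarrow> mat_unit n i j))"
    by (subst (1) mat_comb_mat_unit[OF X, symmetric], rule linear_on_mat_comb[OF E])
       (auto simp: mat_unit_def)
  then show ?thesis
    using ab by (simp add: sum.cartesian_product split_def)
qed


definition block_at :: "nat \<Rightarrow> nat \<Rightarrow> nat \<Rightarrow> cmat \<Rightarrow> cmat" where
  "block_at n R C X = mat n n (\<lambda>(i,j). X $$ (R*n+i, C*n+j))"

definition slice_at :: "nat \<Rightarrow> nat \<Rightarrow> nat \<Rightarrow> nat \<Rightarrow> cmat \<Rightarrow> cmat" where
  "slice_at n k s t X = mat n n (\<lambda>(i,j). X $$ (i*k+s, j*k+t))"

lemma block_at_carrier [simp]: "block_at n R C X \<in> carrier_mat n n"
  and block_at_dim [simp]: "dim_row (block_at n R C X) = n" "dim_col (block_at n R C X) = n"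
  and slice_at_carrier [simp]: "slice_at n k s t X \<in> carrier_mat n n"
  and slice_at_dim [simp]: "dim_row (slice_at n k s t X) = n" "dim_col (slice_at n k s t X) = n"
  by (simp_all add: block_at_def slice_at_def)

lemma block_at_index [simp]: "i < n \<Longrightarrow> j < n \<Longrightarrow> block_at n R C X $$ (i,j) = X $$ (R*n+i, C*n+j)"
  and slice_at_index [simp]: "i < n \<Longrightarrow> j < n \<Longrightarrow> slice_at n k s t X $$ (i,j) = X $$ (i*k+s, j*k+t)"
  by (simp_all add: block_at_def slice_at_def)

lemma app2_carrier [simp]: "app2 k n m E X \<in> carrier_mat (k*m) (k*m)"
  and app2_dim [simp]: "dim_row (app2 k n m E X) = k*m" "dim_col (app2 k n m E X) = k*m"
  and app1_carrier [simp]: "app1 n m k E X \<in> carrier_mat (m*k) (m*k)"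
  and app1_dim [simp]: "dim_row (app1 n m k E X) = m*k" "dim_col (app1 n m k E X) = m*k"
  by (simp_all add: app2_def app1_def)

lemma app2_index:
  "r < k*m \<Longrightarrow> c < k*m \<Longrightarrow>
     app2 k n m E X $$ (r,c) = E (block_at n (r div m) (c div m) X) $$ (r mod m, c mod m)"
  by (simp add: app2_def block_at_def)

lemma app1_index:
  "r < m*k \<Longrightarrow> c < m*k \<Longrightarrow>
     app1 n m k E X $$ (r,c) = E (slice_at n k (r mod k) (c mod k) X) $$ (r div k, c div k)"
  by (simp add: app1_def slice_at_def)

lemma app1_cong: "(\<And>Y. Y \<in> carrier_mat n n \<Longrightarrow> F Y = G Y) \<Longrightarrow> app1 n m k F X = app1 n m k G X"
  unfolding app1_def by (rule cong_mat) auto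

lemma block_at_app2:
  assumes "\<forall>Y\<in>carrier_mat n n. E Y \<in> carrier_mat m m" "R < k" "C < k"
  shows "block_at m R C (app2 k n m E X) = E (block_at n R C X)"
proof -
  have EB: "E (block_at n R C X) \<in> carrier_mat m m" using assms(1) by simp
  show ?thesis by (rule eq_matI) (use assms EB in \<open>auto simp: app2_index mult_add_less_mult\<close>)
qed

lemma slice_at_app2:
  assumes "s < m" "t < m"
  shows "slice_at k m s t (app2 k n m E X) = mat k k (\<lambda>(i,j). E (block_at n i j X) $$ (s,t))"
  by (rule eq_matI) (use assms in \<open>auto simp: app2_index mult_add_less_mult\<close>)

lemma block_at_app1:
  assumes "R < m" "C < m"
  shows "block_at k R C (app1 n m k E X) = mat k k (\<lambda>(s,t). E (slice_at n k s t X) $$ (R,C))"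
  by (rule eq_matI) (use assms in \<open>auto simp: app1_index mult_add_less_mult\<close>)

lemma app2_id: "X \<in> carrier_mat (k*n) (k*n) \<Longrightarrow> app2 k n n id X = X"
  by (rule eq_matI) (auto simp: app2_index mod_less_of_less_mult)

lemma app1_one: "X \<in> carrier_mat n n \<Longrightarrow> F X \<in> carrier_mat m m \<Longrightarrow> app1 n m 1 F X = F X"
proof -
  assume X: "X \<in> carrier_mat n n" and FX: "F X \<in> carrier_mat m m"
  have "slice_at n 1 0 0 X = X" using X by (intro eq_matI) auto
  then show ?thesis using FX by (intro eq_matI) (auto simp: app1_index)
qed

lemma app2_comp:
  assumes "\<forall>Y\<in>carrier_mat n n. E Y \<in> carrier_mat m m"
  shows "app2 k m l F (app2 k n m E X) = app2 k n l (F \<circ> E) X"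
  by (rule eq_matI) (use assms in \<open>auto simp: app2_index block_at_app2 div_less_of_less_mult\<close>)

lemma linear_on_app2:
  assumes E: "linear_on n m E"
  shows "linear_on (k*n) (k*m) (app2 k n m E)"
  unfolding linear_on_def
proof (intro conjI ballI allI)
  fix X Y :: cmat and a assume X: "X \<in> carrier_mat (k*n) (k*n)" and Y: "Y \<in> carrier_mat (k*n) (k*n)"
  have dims: "dim_row (E (block_at n R C Z)) = m" "dim_col (E (block_at n R C Z)) = m" for R C Z
    using linear_onD(1)[OF E block_at_carrier] by auto
  have blocks: "block_at n R C (X + Y) = block_at n R C X + block_at n R C Y"
    "block_at n R C (a \<cdot>\<^sub>m X) = a \<cdot>\<^sub>m block_at n R C X" if "R < k" "C < k" for R C
    using that X Y by (auto simp: mult_add_less_mult)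
  show "app2 k n m E (X + Y) = app2 k n m E X + app2 k n m E Y"
    by (rule eq_matI) (auto simp: app2_index blocks div_less_of_less_mult mod_less_of_less_mult
        dims linear_onD(2,3)[OF E block_at_carrier])
  show "app2 k n m E (a \<cdot>\<^sub>m X) = a \<cdot>\<^sub>m app2 k n m E X"
    by (rule eq_matI) (auto simp: app2_index blocks div_less_of_less_mult mod_less_of_less_mult
        dims linear_onD(2,3)[OF E block_at_carrier])
qed simp

lemma linear_on_app2_comp:
  "linear_on n (n*n') A \<Longrightarrow> linear_on n' m E \<Longrightarrow> linear_on n (n*m) (\<lambda>Y. app2 n n' m E (A Y))"
  using linear_on_app2[of n' m E n] unfolding linear_on_def by auto

lemma ptr1_eq_mat_comb: "ptr1 k n X = mat_comb n {..<k} (\<lambda>_. 1) (\<lambda>R. block_at n R R X)"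
  by (rule eq_matI) (auto simp: ptr1_def)

lemma ptr1_app2:
  assumes E: "linear_on n m E"
  shows "ptr1 k m (app2 k n m E X) = E (ptr1 k n X)"
proof -
  have "ptr1 k m (app2 k n m E X) = mat_comb m {..<k} (\<lambda>_. 1) (\<lambda>R. E (block_at n R R X))"
    unfolding ptr1_eq_mat_comb by (rule mat_comb_cong) (auto simp: block_at_app2 linear_onD(1)[OF E])
  also have "\<dots> = E (ptr1 k n X)"
    unfolding ptr1_eq_mat_comb by (rule linear_on_mat_comb[OF E, symmetric]) auto
  finally show ?thesis .
qed

lemma ptr1_app1: "ptr1 n (m*e) (app1 n (n*m) e Phi X) = app1 n m e (\<lambda>Y. ptr1 n m (Phi Y)) X"
proof (rule eq_matI)
  fix a b assume "a < dim_row (app1 n m e (\<lambda>Y. ptr1 n m (Phi Y)) X)"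
    "b < dim_col (app1 n m e (\<lambda>Y. ptr1 n m (Phi Y)) X)"
  then have ab: "a < m*e" "b < m*e" by auto
  then have e: "e > 0" by (cases e) auto
  have shift: "(i*(m*e)+a) div e = i*m + a div e" "(i*(m*e)+b) div e = i*m + b div e"
    "(i*(m*e)+a) mod e = a mod e" "(i*(m*e)+b) mod e = b mod e" for i
    using e by (simp_all add: mult.assoc[symmetric])
  have "i*(m*e)+a < n*m*e" "i*(m*e)+b < n*m*e" if "i < n" for i
    using mult_add_less_mult[OF that] ab by (auto simp: mult.assoc)
  then show "ptr1 n (m*e) (app1 n (n*m) e Phi X) $$ (a,b) = app1 n m e (\<lambda>Y. ptr1 n m (Phi Y)) X $$ (a,b)"
    using ab by (simp add: ptr1_def app1_index shift div_less_of_less_mult)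
qed (auto simp: ptr1_def)

lemma sum4_swap:
  "(\<Sum>u\<in>A. \<Sum>v\<in>B. \<Sum>i\<in>C. \<Sum>j\<in>D. f u v i j) = (\<Sum>i\<in>C. \<Sum>j\<in>D. \<Sum>u\<in>A. \<Sum>v\<in>B. f u v i j)"
proof -
  have "(\<Sum>u\<in>A. \<Sum>v\<in>B. \<Sum>i\<in>C. \<Sum>j\<in>D. f u v i j) = (\<Sum>u\<in>A. \<Sum>i\<in>C. \<Sum>v\<in>B. \<Sum>j\<in>D. f u v i j)"
    by (rule sum.cong[OF refl], rule sum.swap)
  also have "\<dots> = (\<Sum>i\<in>C. \<Sum>u\<in>A. \<Sum>j\<in>D. \<Sum>v\<in>B. f u v i j)"
    by (subst sum.swap) (rule sum.cong[OF refl], rule sum.cong[OF refl], rule sum.swap)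
  also have "\<dots> = (\<Sum>i\<in>C. \<Sum>j\<in>D. \<Sum>u\<in>A. \<Sum>v\<in>B. f u v i j)"
    by (rule sum.cong[OF refl], rule sum.swap)
  finally show ?thesis .
qed

text \<open>Both sides expand, by linearity, into the same fourfold sum over matrix units.\<close>
lemma app2_app1_comm:
  assumes Phi: "linear_on n m Phi" and I: "linear_on e e' I" and X: "X \<in> carrier_mat (n*e) (n*e)"
  shows "app2 m e e' I (app1 n m e Phi X) = app1 n m e' Phi (app2 n e e' I X)"
proof (rule eq_matI)
  fix r c assume "r < dim_row (app1 n m e' Phi (app2 n e e' I X))"
    "c < dim_col (app1 n m e' Phi (app2 n e e' I X))"
  then have rc: "r < m*e'" "c < m*e'" by auto
  define R C s t where "R = r div e'" "C = c div e'" "s = r mod e'" "t = c mod e'"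
  have RC: "R < m" "C < m" "s < e'" "t < e'"
    using rc by (auto simp: R_C_s_t_def div_less_of_less_mult mod_less_of_less_mult)
  have "app2 m e e' I (app1 n m e Phi X) $$ (r,c)
      = I (mat e e (\<lambda>(u,v). Phi (slice_at n e u v X) $$ (R,C))) $$ (s,t)"
    using rc RC by (simp add: app2_index block_at_app1 R_C_s_t_def)
  also have "\<dots> = (\<Sum>u<e. \<Sum>v<e. \<Sum>i<n. \<Sum>j<n.
      X $$ (i*e+u, j*e+v) * Phi (mat_unit n i j) $$ (R,C) * I (mat_unit e u v) $$ (s,t))"
    by (subst linear_on_index[OF I]) (auto simp: RC linear_on_index[OF Phi] sum_distrib_right)
  also have "\<dots> = (\<Sum>i<n. \<Sum>j<n. \<Sum>u<e. \<Sum>v<e.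
      X $$ (i*e+u, j*e+v) * I (mat_unit e u v) $$ (s,t) * Phi (mat_unit n i j) $$ (R,C))"
    by (subst sum4_swap) (simp add: mult_ac)
  also have "\<dots> = Phi (mat n n (\<lambda>(i,j). I (block_at e i j X) $$ (s,t))) $$ (R,C)"
    by (subst linear_on_index[OF Phi])
       (auto simp: RC linear_on_index[OF I] sum_distrib_right)
  also have "\<dots> = app1 n m e' Phi (app2 n e e' I X) $$ (r,c)"
    using rc RC by (simp add: app1_index slice_at_app2 R_C_s_t_def)
  finally show "app2 m e e' I (app1 n m e Phi X) $$ (r,c) = app1 n m e' Phi (app2 n e e' I X) $$ (r,c)" .
qed auto

lemma reorder_app1: "reorder k n (app1 m k n F (reorder n m W)) = app2 n m k F W"
proof (rule eq_matI)
  fix r c assume "r < dim_row (app2 n m k F W)" "c < dim_col (app2 n m k F W)"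
  then have rc: "r < n*k" "c < n*k" by auto
  have d: "r div k < n" "c div k < n" "r mod k < k" "c mod k < k"
    using rc by (auto simp: div_less_of_less_mult mod_less_of_less_mult)
  have "slice_at m n (r div k) (c div k) (reorder n m W) = block_at m (r div k) (c div k) W"
    by (rule eq_matI) (auto simp: reorder_def d mult_add_less_mult
        mult_add_less_mult[of _ m _ n, unfolded mult.commute[of m n]])
  then show "reorder k n (app1 m k n F (reorder n m W)) $$ (r,c) = app2 n m k F W $$ (r,c)"
    using rc d by (simp add: reorder_def app1_index app2_index mult_add_less_mult)
qed (auto simp: reorder_def)

lemma linear_on_ptr1: "linear_on (n*m) m (ptr1 n m)"
  and linear_on_ptr2: "linear_on (n*m) n (ptr2 n m)"
  and linear_on_reorder: "linear_on (n*m) (m*n) (reorder n m)"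
  unfolding linear_on_def
  by (auto simp: ptr1_def ptr2_def reorder_def sum.distrib sum_distrib_left
      mult_add_less_mult mult_add_less_mult[of _ n _ m, unfolded mult.commute[of n m]]
      div_less_of_less_mult mod_less_of_less_mult)


definition swap_idx :: "nat \<Rightarrow> nat \<Rightarrow> nat" where
  "swap_idx n r = (r mod n)*n + r div n"

lemma swap_idx_less: "r < n*n \<Longrightarrow> swap_idx n r < n*n"
  unfolding swap_idx_def by (rule mult_add_less_mult) (auto simp: mod_less_of_less_mult div_less_of_less_mult)

lemma swap_idx_div [simp]: "r < n*n \<Longrightarrow> swap_idx n r div n = r mod n"
  and swap_idx_mod [simp]: "r < n*n \<Longrightarrow> swap_idx n r mod n = r div n"
  unfolding swap_idx_def by (simp_all add: div_less_of_less_mult)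

lemma swap_op_carrier [simp]: "swap_op n \<in> carrier_mat (n*n) (n*n)"
  and swap_op_dim [simp]: "dim_row (swap_op n) = n*n" "dim_col (swap_op n) = n*n"
  by (simp_all add: swap_op_def)

lemma swap_op_index:
  assumes "r < n*n" "c < n*n"
  shows "swap_op n $$ (r,c) = (if c = swap_idx n r then 1 else 0)"
proof -
  have "r div n = c mod n \<and> r mod n = c div n \<longleftrightarrow> c = swap_idx n r"
  proof
    assume "r div n = c mod n \<and> r mod n = c div n"
    then show "c = swap_idx n r" unfolding swap_idx_def by (metis div_mult_mod_eq)
  qed (use assms in simp)
  then show ?thesis using assms by (simp add: swap_op_def)
qed

lemma swap_op_index':
  assumes "r < n*n" "c < n*n"
  shows "swap_op n $$ (r,c) = (if r = swap_idx n c then 1 else 0)"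
proof -
  have "swap_op n $$ (r,c) = swap_op n $$ (c,r)" using assms by (auto simp: swap_op_def)
  then show ?thesis using swap_op_index[OF assms(2,1)] by simp
qed

lemma reorder_index_sq: "r < n*n \<Longrightarrow> c < n*n \<Longrightarrow> reorder n n A $$ (r,c) = A $$ (swap_idx n r, swap_idx n c)"
  by (simp add: reorder_def swap_idx_def)

lemma swap_op_conj:
  assumes M: "M \<in> carrier_mat (n*n) (n*n)"
  shows "swap_op n * M * swap_op n = reorder n n M"
proof -
  have left: "swap_op n * M = mat (n*n) (n*n) (\<lambda>(r,c). M $$ (swap_idx n r, c))"
  proof (rule eq_matI)
    fix r c assume "r < dim_row (mat (n*n) (n*n) (\<lambda>(r,c). M $$ (swap_idx n r, c)))"
      "c < dim_col (mat (n*n) (n*n) (\<lambda>(r,c). M $$ (swap_idx n r, c)))"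
    then have rc: "r < n*n" "c < n*n" by auto
    have "(swap_op n * M) $$ (r,c) = (\<Sum>k<n*n. swap_op n $$ (r,k) * M $$ (k,c))"
      using rc M by (simp add: scalar_prod_def lessThan_atLeast0)
    also have "\<dots> = (\<Sum>k<n*n. if k = swap_idx n r then M $$ (k,c) else 0)"
      by (rule sum.cong) (auto simp: swap_op_index rc)
    finally show "(swap_op n * M) $$ (r,c) = mat (n*n) (n*n) (\<lambda>(r,c). M $$ (swap_idx n r, c)) $$ (r,c)"
      using rc swap_idx_less[OF rc(1)] by simp
  qed (use M in auto)
  show ?thesis
  proof (rule eq_matI)
    fix r c assume "r < dim_row (reorder n n M)" "c < dim_col (reorder n n M)"
    then have rc: "r < n*n" "c < n*n" by (auto simp: reorder_def)
    have "(swap_op n * M * swap_op n) $$ (r,c) = (\<Sum>k<n*n. M $$ (swap_idx n r, k) * swap_op n $$ (k,c))"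
      using rc M by (simp add: left scalar_prod_def lessThan_atLeast0)
    also have "\<dots> = (\<Sum>k<n*n. if k = swap_idx n c then M $$ (swap_idx n r, k) else 0)"
      by (rule sum.cong) (auto simp: swap_op_index' rc)
    finally show "(swap_op n * M * swap_op n) $$ (r,c) = reorder n n M $$ (r,c)"
      using rc swap_idx_less[OF rc(2)] by (simp add: reorder_index_sq)
  qed (auto simp: reorder_def)
qed

lemma mtrace_carrier: "X \<in> carrier_mat n n \<Longrightarrow> mtrace X = (\<Sum>i<n. X $$ (i,i))"
  by (simp add: mtrace_def)

lemma mtrace_add: "X \<in> carrier_mat n n \<Longrightarrow> Y \<in> carrier_mat n n \<Longrightarrow> mtrace (X + Y) = mtrace X + mtrace Y"
  by (auto simp: mtrace_def sum.distrib[symmetric] intro: sum.cong)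

lemma mtrace_smult: "X \<in> carrier_mat n n \<Longrightarrow> mtrace (a \<cdot>\<^sub>m X) = a * mtrace X"
  by (auto simp: mtrace_def sum_distrib_left intro: sum.cong)

lemma kron_carrier [simp]: "kron n m X Y \<in> carrier_mat (n*m) (n*m)"
  and kron_dim [simp]: "dim_row (kron n m X Y) = n*m" "dim_col (kron n m X Y) = n*m"
  by (simp_all add: kron_def)

lemma kron_index [simp]:
  "r < n*m \<Longrightarrow> c < n*m \<Longrightarrow> kron n m X Y $$ (r,c) = X $$ (r div m, c div m) * Y $$ (r mod m, c mod m)"
  by (simp add: kron_def)

lemma mtrace_kron: "mtrace (kron n m X Y) = mtrace X * mtrace Y"
  if "X \<in> carrier_mat n n" "Y \<in> carrier_mat m m"
  using that by (auto simp: mtrace_def sum_lessThan_mult mult_add_less_mult sum_product)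

lemma ptr1_kron: "X \<in> carrier_mat n n \<Longrightarrow> Y \<in> carrier_mat m m \<Longrightarrow> ptr1 n m (kron n m X Y) = mtrace X \<cdot>\<^sub>m Y"
  by (rule eq_matI) (auto simp: ptr1_def mtrace_carrier mult_add_less_mult sum_distrib_right)

lemma ptr2_kron: "X \<in> carrier_mat n n \<Longrightarrow> Y \<in> carrier_mat m m \<Longrightarrow> ptr2 n m (kron n m X Y) = mtrace Y \<cdot>\<^sub>m X"
  by (rule eq_matI) (auto simp: ptr2_def mtrace_carrier mult_add_less_mult sum_distrib_left mult.commute)

lemma reorder_kron: "reorder n m (kron n m X Y) = kron m n Y X"
proof (rule eq_matI)
  fix r c assume "r < dim_row (kron m n Y X)" "c < dim_col (kron m n Y X)"
  then have rc: "r < m*n" "c < m*n" by auto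
  then have "r mod n < n" "r div n < m" "c mod n < n" "c div n < m"
    by (auto simp: div_less_of_less_mult mod_less_of_less_mult)
  then show "reorder n m (kron n m X Y) $$ (r,c) = kron m n Y X $$ (r,c)"
    using rc by (simp add: reorder_def mult_add_less_mult)
qed (auto simp: reorder_def)

lemma ptr2_eq_ptr1_reorder: "ptr2 n m Z = ptr1 m n (reorder n m Z)"
  by (rule eq_matI) (auto simp: ptr1_def ptr2_def reorder_def mult_add_less_mult
      mult_add_less_mult[of _ m _ n, unfolded mult.commute[of m n]])

lemma reorder_swap_op: "reorder n n (swap_op n) = swap_op n"
  by (rule eq_matI)
     (auto simp: reorder_def swap_op_def mult_add_less_mult div_less_of_less_mult mod_less_of_less_mult)

lemma ptr1_swap_op: "ptr1 n n (swap_op n) = 1\<^sub>m n"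
proof -
  have "(\<Sum>i<n. if i = l \<and> j = i then 1 else 0) = (if j = l then 1 else (0::complex))" if "l < n" for j l
    using that by (cases "j = l") (auto cong: conj_cong)
  then show ?thesis by (auto simp: ptr1_def swap_op_def mult_add_less_mult)
qed

lemma ptr2_swap_op: "ptr2 n n (swap_op n) = 1\<^sub>m n"
  by (simp add: ptr2_eq_ptr1_reorder reorder_swap_op ptr1_swap_op)


definition quad_form :: "nat \<Rightarrow> cmat \<Rightarrow> (nat \<Rightarrow> complex) \<Rightarrow> complex" where
  "quad_form n X v = (\<Sum>i<n. \<Sum>j<n. cnj (v i) * X $$ (i,j) * v j)"

lemma psd_iff:
  "psd n X \<longleftrightarrow> X \<in> carrier_mat n n \<and> (\<forall>v. Im (quad_form n X v) = 0 \<and> Re (quad_form n X v) \<ge> 0)"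
  unfolding psd_def quad_form_def Let_def by simp

lemma psd_carrier: "psd n X \<Longrightarrow> X \<in> carrier_mat n n"
  unfolding psd_def by blast

lemma density_carrier: "density n X \<Longrightarrow> X \<in> carrier_mat n n"
  unfolding density_def by (blast dest: psd_carrier)

lemma hermitianI:
  "X \<in> carrier_mat n n \<Longrightarrow> (\<And>i j. i < n \<Longrightarrow> j < n \<Longrightarrow> X $$ (j,i) = cnj (X $$ (i,j))) \<Longrightarrow> hermitian n X"
  unfolding hermitian_def by blast

lemma hermitianD:
  assumes "hermitian n X"
  shows "X \<in> carrier_mat n n" and "i < n \<Longrightarrow> j < n \<Longrightarrow> cnj (X $$ (i,j)) = X $$ (j,i)"
proof -
  show "X \<in> carrier_mat n n" using assms unfolding hermitian_def by blast
  show "cnj (X $$ (i,j)) = X $$ (j,i)" if "i < n" "j < n"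
    using assms that unfolding hermitian_def by metis
qed

lemma hermitian_mtrace_real:
  assumes "hermitian n X"
  shows "cnj (mtrace X) = mtrace X"
  unfolding mtrace_carrier[OF hermitianD(1)[OF assms]] cnj_sum
  by (rule sum.cong) (auto simp: hermitianD(2)[OF assms])

lemma hermitian_add: "hermitian k (A + B)"
  and hermitian_diff: "hermitian k (A - B)"
  if "hermitian k A" "hermitian k B"
  using hermitianD[OF that(1)] hermitianD[OF that(2)] by (auto intro!: hermitianI)

lemma hermitian_smult: "hermitian k X \<Longrightarrow> cnj c = c \<Longrightarrow> hermitian k (c \<cdot>\<^sub>m X)"
  using hermitianD[of k X] by (auto intro!: hermitianI)

lemma hermitian_mat_comb:
  assumes "\<And>k. k \<in> K \<Longrightarrow> hermitian d (M k)" "\<And>k. k \<in> K \<Longrightarrow> cnj (c k) = c k"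
  shows "hermitian d (mat_comb d K c M)"
proof (rule hermitianI)
  fix i j assume "i < d" "j < d"
  then show "mat_comb d K c M $$ (j,i) = cnj (mat_comb d K c M $$ (i,j))"
    unfolding mat_comb_index[OF \<open>j < d\<close> \<open>i < d\<close>] mat_comb_index[OF \<open>i < d\<close> \<open>j < d\<close>] cnj_sum
    by (intro sum.cong refl) (simp add: assms(2) hermitianD(2)[OF assms(1)])
qed simp

lemma quad_form_restrict:
  assumes S: "S \<subseteq> {..<n}"
    and z: "\<And>i j. i < n \<Longrightarrow> j < n \<Longrightarrow> i \<notin> S \<or> j \<notin> S \<Longrightarrow> cnj (v i) * X $$ (i,j) * v j = 0"
  shows "quad_form n X v = (\<Sum>i\<in>S. \<Sum>j\<in>S. cnj (v i) * X $$ (i,j) * v j)"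
proof -
  have "quad_form n X v = (\<Sum>i<n. \<Sum>j\<in>S. cnj (v i) * X $$ (i,j) * v j)"
    unfolding quad_form_def by (intro sum.cong refl sum.mono_neutral_right) (use S z in auto)
  also have "\<dots> = (\<Sum>i\<in>S. \<Sum>j\<in>S. cnj (v i) * X $$ (i,j) * v j)"
    by (intro sum.mono_neutral_right ballI sum.neutral) (use S z in auto)
  finally show ?thesis .
qed

lemma psd_diag:
  assumes "psd n X" "a < n"
  shows "Im (X $$ (a,a)) = 0" "Re (X $$ (a,a)) \<ge> 0"
proof -
  define v where "v = (\<lambda>i. if i = a then (1::complex) else 0)"
  have "quad_form n X v = (\<Sum>i\<in>{a}. \<Sum>j\<in>{a}. cnj (v i) * X $$ (i,j) * v j)"
    by (rule quad_form_restrict) (auto simp: v_def assms(2))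
  then have "quad_form n X v = X $$ (a,a)" by (simp add: v_def)
  then show "Im (X $$ (a,a)) = 0" "Re (X $$ (a,a)) \<ge> 0" using assms(1) unfolding psd_iff by metis+
qed

text \<open>Testing positivity on the vectors \<open>e\<^sub>i + e\<^sub>j\<close> and \<open>e\<^sub>i + \<i> e\<^sub>j\<close>.\<close>
lemma psd_hermitian:
  assumes "psd n X"
  shows "hermitian n X"
proof (rule hermitianI)
  show "X \<in> carrier_mat n n" using assms by (rule psd_carrier)
  fix i j assume ij: "i < n" "j < n"
  show "X $$ (j,i) = cnj (X $$ (i,j))"
  proof (cases "i = j")
    case True
    then show ?thesis using psd_diag[OF assms ij(1)] by (simp add: complex_eq_iff)
  next
    case False
    have two: "quad_form n X v = cnj (v i) * X $$ (i,i) * v i + cnj (v i) * X $$ (i,j) * v j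
        + cnj (v j) * X $$ (j,i) * v i + cnj (v j) * X $$ (j,j) * v j"
      if "\<And>k. k \<noteq> i \<Longrightarrow> k \<noteq> j \<Longrightarrow> v k = 0" for v
    proof -
      have "quad_form n X v = (\<Sum>a\<in>{i,j}. \<Sum>b\<in>{i,j}. cnj (v a) * X $$ (a,b) * v b)"
        by (rule quad_form_restrict) (use ij that in auto)
      then show ?thesis using False by (simp add: algebra_simps)
    qed
    define v1 where "v1 = (\<lambda>k. if k = i \<or> k = j then (1::complex) else 0)"
    define v2 where "v2 = (\<lambda>k. if k = i then (1::complex) else if k = j then \<i> else 0)"
    have q1: "quad_form n X v1 = X $$ (i,i) + X $$ (i,j) + X $$ (j,i) + X $$ (j,j)"
      by (subst two) (auto simp: v1_def)
    have q2: "quad_form n X v2 = X $$ (i,i) + \<i> * X $$ (i,j) - \<i> * X $$ (j,i) + X $$ (j,j)"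
      by (subst two) (use False in \<open>auto simp: v2_def algebra_simps\<close>)
    have "Im (quad_form n X v1) = 0" "Im (quad_form n X v2) = 0" using assms psd_iff by blast+
    moreover have "Im (X $$ (i,i)) = 0" "Im (X $$ (j,j)) = 0" using psd_diag[OF assms] ij by auto
    ultimately show ?thesis unfolding q1 q2 by (simp add: complex_eq_iff)
  qed
qed

lemma density_hermitian: "density n \<rho> \<Longrightarrow> hermitian n \<rho>"
  unfolding density_def by (blast intro: psd_hermitian)

lemma quad_form_hermitian_real:
  assumes "hermitian n Y"
  shows "Im (quad_form n Y v) = 0"
proof -
  have "cnj (quad_form n Y v) = (\<Sum>i<n. \<Sum>j<n. cnj (v j) * Y $$ (j,i) * v i)"
    unfolding quad_form_def cnj_sum by (intro sum.cong refl) (simp add: hermitianD(2)[OF assms])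
  also have "\<dots> = quad_form n Y v" unfolding quad_form_def by (rule sum.swap)
  finally have "cnj (quad_form n Y v) = quad_form n Y v" .
  from arg_cong[OF this, of Im] show ?thesis by simp
qed

lemma quad_form_one: "quad_form n (1\<^sub>m n) v = complex_of_real (\<Sum>k<n. (cmod (v k))\<^sup>2)"
proof -
  have "(\<Sum>j<n. cnj (v i) * 1\<^sub>m n $$ (i,j) * v j) = complex_of_real ((cmod (v i))\<^sup>2)" if "i < n" for i
  proof -
    have "(\<Sum>j<n. cnj (v i) * 1\<^sub>m n $$ (i,j) * v j) = (\<Sum>j<n. if j = i then cnj (v i) * v i else 0)"
      by (rule sum.cong) (use that in auto)
    also have "\<dots> = complex_of_real ((cmod (v i))\<^sup>2)"
      using that complex_norm_square[of "v i"] by (simp add: mult.commute)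
    finally show ?thesis .
  qed
  then show ?thesis unfolding quad_form_def of_real_sum by (intro sum.cong) auto
qed

lemma quad_form_add:
  "A \<in> carrier_mat n n \<Longrightarrow> B \<in> carrier_mat n n \<Longrightarrow> quad_form n (A + B) v = quad_form n A v + quad_form n B v"
  unfolding quad_form_def sum.distrib[symmetric] by (intro sum.cong refl) (simp add: algebra_simps)

lemma quad_form_smult: "A \<in> carrier_mat n n \<Longrightarrow> quad_form n (a \<cdot>\<^sub>m A) v = a * quad_form n A v"
  unfolding quad_form_def sum_distrib_left by (intro sum.cong refl) (simp add: algebra_simps)
lemma psd_add: "psd n A \<Longrightarrow> psd n B \<Longrightarrow> psd n (A + B)"
  by (auto simp: psd_iff quad_form_add)

lemma psd_smult: "psd n X \<Longrightarrow> r \<ge> 0 \<Longrightarrow> psd n (complex_of_real r \<cdot>\<^sub>m X)"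
  by (auto simp: psd_iff quad_form_smult)

lemma psd_one: "psd n (1\<^sub>m n)"
  by (simp add: psd_iff quad_form_one sum_nonneg)

definition entry_norm_sum :: "nat \<Rightarrow> cmat \<Rightarrow> real" where
  "entry_norm_sum n Y = (\<Sum>i<n. \<Sum>j<n. cmod (Y $$ (i,j)))"

lemma norm_quad_form_le:
  "cmod (quad_form n Y v) \<le> entry_norm_sum n Y * (\<Sum>k<n. (cmod (v k))\<^sup>2)"
proof -
  define N where "N = (\<Sum>k<n. (cmod (v k))\<^sup>2)"
  have vv: "cmod (v i) * cmod (v j) \<le> N" if "i < n" "j < n" for i j
  proof -
    have "cmod (v i) * cmod (v j) \<le> ((cmod (v i))\<^sup>2 + (cmod (v j))\<^sup>2) / 2"
      using sum_squares_bound[of "cmod (v i)" "cmod (v j)"] by (simp add: power2_eq_square field_simps)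
    also have "\<dots> \<le> N"
      using member_le_sum[of i "{..<n}" "\<lambda>k. (cmod (v k))\<^sup>2"] member_le_sum[of j "{..<n}" "\<lambda>k. (cmod (v k))\<^sup>2"]
        that unfolding N_def by simp
    finally show ?thesis .
  qed
  have "cmod (cnj (v i) * Y $$ (i,j) * v j) \<le> cmod (Y $$ (i,j)) * N" if "i < n" "j < n" for i j
  proof -
    have "cmod (Y $$ (i,j)) * (cmod (v i) * cmod (v j)) \<le> cmod (Y $$ (i,j)) * N"
      using vv[OF that] by (intro mult_left_mono) auto
    then show ?thesis by (simp add: norm_mult mult_ac)
  qed
  then have "cmod (quad_form n Y v) \<le> (\<Sum>i<n. \<Sum>j<n. cmod (Y $$ (i,j)) * N)"
    unfolding quad_form_def by (intro order_trans[OF norm_sum sum_mono] order_trans[OF norm_sum sum_mono]) auto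
  then show ?thesis unfolding N_def entry_norm_sum_def by (simp add: sum_distrib_right)
qed

lemma psd_shift_hermitian:
  assumes H: "hermitian n Y"
  shows "psd n (Y + complex_of_real (entry_norm_sum n Y) \<cdot>\<^sub>m 1\<^sub>m n)"
  unfolding psd_iff
proof (intro conjI allI)
  show "Y + complex_of_real (entry_norm_sum n Y) \<cdot>\<^sub>m 1\<^sub>m n \<in> carrier_mat n n"
    using hermitianD(1)[OF H] by simp
  fix v
  have q: "quad_form n (Y + complex_of_real (entry_norm_sum n Y) \<cdot>\<^sub>m 1\<^sub>m n) v
      = quad_form n Y v + complex_of_real (entry_norm_sum n Y * (\<Sum>k<n. (cmod (v k))\<^sup>2))"
    using hermitianD(1)[OF H] by (simp add: quad_form_add quad_form_smult quad_form_one)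
  have "- Re (quad_form n Y v) \<le> entry_norm_sum n Y * (\<Sum>k<n. (cmod (v k))\<^sup>2)"
    using abs_Re_le_cmod[of "quad_form n Y v"] norm_quad_form_le[of n Y v] by linarith
  then show "Im (quad_form n (Y + complex_of_real (entry_norm_sum n Y) \<cdot>\<^sub>m 1\<^sub>m n) v) = 0"
    "0 \<le> Re (quad_form n (Y + complex_of_real (entry_norm_sum n Y) \<cdot>\<^sub>m 1\<^sub>m n) v)"
    unfolding q using quad_form_hermitian_real[OF H] by auto
qed

text \<open>A Hermitian matrix differs from a positive one by a real multiple of the identity.\<close>
lemma app2_hermitian:
  assumes E: "linear_on n m E" and CP: "completely_positive n m E" and k: "k > 0"
    and H: "hermitian (k*n) X"
  shows "hermitian (k*m) (app2 k n m E X)"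
proof -
  define c where "c = complex_of_real (entry_norm_sum (k*n) X)"
  have X: "X \<in> carrier_mat (k*n) (k*n)" using hermitianD(1)[OF H] .
  have pos: "hermitian (k*m) (app2 k n m E (X + c \<cdot>\<^sub>m 1\<^sub>m (k*n)))"
    using CP psd_shift_hermitian[OF H] k unfolding c_def completely_positive_def by (blast intro: psd_hermitian)
  have one: "hermitian (k*m) (app2 k n m E (1\<^sub>m (k*n)))"
    using CP psd_one k unfolding completely_positive_def by (blast intro: psd_hermitian)
  have "app2 k n m E X = app2 k n m E (X + c \<cdot>\<^sub>m 1\<^sub>m (k*n)) - c \<cdot>\<^sub>m app2 k n m E (1\<^sub>m (k*n))"
    using X by (simp add: linear_onD[OF linear_on_app2[OF E]]) (intro eq_matI; simp)
  then show ?thesis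
    using hermitian_diff[OF pos hermitian_smult[OF one]] unfolding c_def by simp
qed

lemma psd_compress:
  assumes P: "psd N X" and g: "inj_on g {..<k}" "g ` {..<k} \<subseteq> {..<N}"
  shows "psd k (mat k k (\<lambda>(r,c). X $$ (g r, g c)))"
  unfolding psd_iff
proof (intro conjI allI)
  fix v
  define w :: "nat \<Rightarrow> complex" where "w = (\<lambda>a. if a \<in> g ` {..<k} then v (the_inv_into {..<k} g a) else 0)"
  have "quad_form N X w = (\<Sum>a\<in>g ` {..<k}. \<Sum>b\<in>g ` {..<k}. cnj (w a) * X $$ (a,b) * w b)"
    by (rule quad_form_restrict) (use g in \<open>auto simp: w_def\<close>)
  also have "\<dots> = quad_form k (mat k k (\<lambda>(r,c). X $$ (g r, g c))) v"
    unfolding quad_form_def using g by (simp add: sum.reindex w_def the_inv_into_f_f)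
  finally show "Im (quad_form k (mat k k (\<lambda>(r,c). X $$ (g r, g c))) v) = 0"
    "0 \<le> Re (quad_form k (mat k k (\<lambda>(r,c). X $$ (g r, g c))) v)"
    using P unfolding psd_iff by metis+
qed simp

lemma psd_embed:
  assumes P: "psd k Y" and g: "inj_on g {..<k}" "g ` {..<k} \<subseteq> {..<N}"
    and X: "X \<in> carrier_mat N N"
    and outside: "\<And>a b. a < N \<Longrightarrow> b < N \<Longrightarrow> a \<notin> g ` {..<k} \<or> b \<notin> g ` {..<k} \<Longrightarrow> X $$ (a,b) = 0"
    and inside: "\<And>r c. r < k \<Longrightarrow> c < k \<Longrightarrow> X $$ (g r, g c) = Y $$ (r,c)"
  shows "psd N X"
  unfolding psd_iff
proof (intro conjI allI)
  fix w
  have "quad_form N X w = (\<Sum>a\<in>g ` {..<k}. \<Sum>b\<in>g ` {..<k}. cnj (w a) * X $$ (a,b) * w b)"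
    by (rule quad_form_restrict) (use g outside in auto)
  also have "\<dots> = quad_form k Y (w \<circ> g)"
    unfolding quad_form_def using g by (simp add: sum.reindex inside)
  finally show "Im (quad_form N X w) = 0" "0 \<le> Re (quad_form N X w)"
    using P unfolding psd_iff by metis+
qed (rule X)

lemma density_maximally_mixed: "n > 0 \<Longrightarrow> density n ((1 / of_nat n) \<cdot>\<^sub>m 1\<^sub>m n)"
  using psd_smult[OF psd_one, of "1 / real n" n]
  by (simp add: density_def mtrace_smult[of "1\<^sub>m n" n] mtrace_def)

lemma density_mix:
  assumes "density n \<rho>1" "density n \<rho>2" "0 \<le> p" "p \<le> 1"
  shows "density n (complex_of_real p \<cdot>\<^sub>m \<rho>1 + complex_of_real (1-p) \<cdot>\<^sub>m \<rho>2)"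
proof -
  have "psd n (complex_of_real p \<cdot>\<^sub>m \<rho>1 + complex_of_real (1-p) \<cdot>\<^sub>m \<rho>2)"
    using assms unfolding density_def by (intro psd_add psd_smult) auto
  moreover have "mtrace (complex_of_real p \<cdot>\<^sub>m \<rho>1 + complex_of_real (1-p) \<cdot>\<^sub>m \<rho>2) = 1"
    using assms density_carrier[OF assms(1)] density_carrier[OF assms(2)] unfolding density_def
    by (simp add: mtrace_add[of _ n] mtrace_smult[of _ n] algebra_simps)
  ultimately show ?thesis unfolding density_def by simp
qed

lemma channel_id: "channel n n id"
  unfolding channel_def linear_on_def completely_positive_def by (auto simp: app2_id psd_carrier)

lemma channel_linear: "channel n m E \<Longrightarrow> linear_on n m E"
  unfolding channel_def by blast

lemma channel_comp:
  assumes E: "channel n m E" and F: "channel m l F"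
  shows "channel n l (F \<circ> E)"
proof -
  have cE: "\<forall>Y\<in>carrier_mat n n. E Y \<in> carrier_mat m m"
    using linear_onD(1)[OF channel_linear[OF E]] by blast
  have "linear_on n l (F \<circ> E)"
    using channel_linear[OF E] channel_linear[OF F] unfolding linear_on_def by auto
  moreover have "completely_positive n l (F \<circ> E)"
    using E F unfolding channel_def completely_positive_def by (simp add: app2_comp[OF cE, symmetric])
  ultimately show ?thesis using E F cE unfolding channel_def by auto
qed


definition id_star_base :: "nat \<Rightarrow> cmat \<Rightarrow> cmat" where
  "id_star_base n \<rho> = (1 / of_nat n) \<cdot>\<^sub>m (mtrace \<rho> \<cdot>\<^sub>m swap_op n + kron n n (1\<^sub>m n) (rho_hat n \<rho>)
                          + kron n n (rho_hat n \<rho>) (1\<^sub>m n))"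

lemma id_star_form_eq: "id_star_form n \<Xi> \<rho> = id_star_base n \<rho> + \<Xi> \<rho>"
  by (simp add: id_star_form_def id_star_base_def)

lemma id_star_base_carrier [simp]: "id_star_base n \<rho> \<in> carrier_mat (n*n) (n*n)"
  and id_star_base_dim [simp]: "dim_row (id_star_base n \<rho>) = n*n" "dim_col (id_star_base n \<rho>) = n*n"
  by (simp_all add: id_star_base_def)

lemma rho_hat_carrier [simp]: "rho_hat n \<rho> \<in> carrier_mat n n"
  and rho_hat_dim [simp]: "dim_row (rho_hat n \<rho>) = n" "dim_col (rho_hat n \<rho>) = n"
  by (simp_all add: rho_hat_def minus_carrier_mat)

lemma rho_hat_index:
  "a < n \<Longrightarrow> b < n \<Longrightarrow> rho_hat n \<rho> $$ (a,b) = \<rho> $$ (a,b) - (if a = b then mtrace \<rho> / of_nat n else 0)"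
  by (simp add: rho_hat_def)

lemma mtrace_one: "mtrace (1\<^sub>m n) = of_nat n"
  by (simp add: mtrace_def)

lemma mtrace_rho_hat:
  assumes "n > 0" "\<rho> \<in> carrier_mat n n"
  shows "mtrace (rho_hat n \<rho>) = 0"
proof -
  have "mtrace (rho_hat n \<rho>) = (\<Sum>i<n. \<rho> $$ (i,i)) - of_nat n * (mtrace \<rho> / of_nat n)"
    by (simp add: mtrace_carrier[OF rho_hat_carrier] rho_hat_index sum_subtractf)
  then show ?thesis using assms by (simp add: mtrace_carrier)
qed

lemma linear_on_rho_hat: "linear_on n n (rho_hat n)"
  unfolding linear_on_def
proof (intro conjI ballI allI)
  fix X Y :: cmat and a assume X: "X \<in> carrier_mat n n" and Y: "Y \<in> carrier_mat n n"
  show "rho_hat n (X + Y) = rho_hat n X + rho_hat n Y"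
    by (rule eq_matI) (use X Y in \<open>auto simp: rho_hat_index mtrace_add add_divide_distrib\<close>)
  show "rho_hat n (a \<cdot>\<^sub>m X) = a \<cdot>\<^sub>m rho_hat n X"
    by (rule eq_matI) (use X in \<open>auto simp: rho_hat_index mtrace_smult algebra_simps\<close>)
qed simp

lemma id_star_base_index:
  assumes "r < n*n" "c < n*n"
  shows "id_star_base n \<rho> $$ (r,c) = (1 / of_nat n) * (mtrace \<rho> * swap_op n $$ (r,c)
     + of_bool (r div n = c div n) * rho_hat n \<rho> $$ (r mod n, c mod n)
     + of_bool (r mod n = c mod n) * rho_hat n \<rho> $$ (r div n, c div n))"
  using assms by (simp add: id_star_base_def div_less_of_less_mult mod_less_of_less_mult)

lemma linear_on_id_star_base: "linear_on n (n*n) (id_star_base n)"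
  unfolding linear_on_def
proof (intro conjI ballI allI)
  fix X Y :: cmat and a assume X: "X \<in> carrier_mat n n" and Y: "Y \<in> carrier_mat n n"
  note hat = linear_onD[OF linear_on_rho_hat]
  show "id_star_base n (X + Y) = id_star_base n X + id_star_base n Y"
    by (rule eq_matI) (simp_all add: id_star_base_index mtrace_add[OF X Y] hat(2)[OF X Y]
        div_less_of_less_mult mod_less_of_less_mult ring_distribs)
  show "id_star_base n (a \<cdot>\<^sub>m X) = a \<cdot>\<^sub>m id_star_base n X"
    by (rule eq_matI) (simp_all add: id_star_base_index mtrace_smult[OF X] hat(3)[OF X]
        div_less_of_less_mult mod_less_of_less_mult ring_distribs mult_ac)
qed simp

lemma ptr1_id_star_base:
  assumes "n > 0" "\<rho> \<in> carrier_mat n n"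
  shows "ptr1 n n (id_star_base n \<rho>) = \<rho>"
proof -
  have "ptr1 n n (id_star_base n \<rho>)
      = (1 / of_nat n) \<cdot>\<^sub>m (mtrace \<rho> \<cdot>\<^sub>m 1\<^sub>m n + of_nat n \<cdot>\<^sub>m rho_hat n \<rho> + 0 \<cdot>\<^sub>m 1\<^sub>m n)"
    using assms by (simp add: id_star_base_def linear_onD[OF linear_on_ptr1] ptr1_kron ptr1_swap_op
        mtrace_one mtrace_rho_hat)
  also have "\<dots> = \<rho>" using assms by (intro eq_matI) (auto simp: rho_hat_index field_simps)
  finally show ?thesis .
qed

lemma ptr2_id_star_base:
  assumes "n > 0" "\<rho> \<in> carrier_mat n n"
  shows "ptr2 n n (id_star_base n \<rho>) = \<rho>"
proof -
  have "ptr2 n n (id_star_base n \<rho>)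
      = (1 / of_nat n) \<cdot>\<^sub>m (mtrace \<rho> \<cdot>\<^sub>m 1\<^sub>m n + 0 \<cdot>\<^sub>m 1\<^sub>m n + of_nat n \<cdot>\<^sub>m rho_hat n \<rho>)"
    using assms by (simp add: id_star_base_def linear_onD[OF linear_on_ptr2] ptr2_kron ptr2_swap_op
        mtrace_one mtrace_rho_hat)
  also have "\<dots> = \<rho>" using assms by (intro eq_matI) (auto simp: rho_hat_index field_simps)
  finally show ?thesis .
qed

lemma reorder_id_star_base: "reorder n n (id_star_base n \<rho>) = id_star_base n \<rho>"
proof -
  have "reorder n n (id_star_base n \<rho>) = (1 / of_nat n) \<cdot>\<^sub>m (mtrace \<rho> \<cdot>\<^sub>m swap_op n
      + kron n n (rho_hat n \<rho>) (1\<^sub>m n) + kron n n (1\<^sub>m n) (rho_hat n \<rho>))"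
    by (simp add: id_star_base_def linear_onD[OF linear_on_reorder] reorder_kron reorder_swap_op)
  also have "\<dots> = id_star_base n \<rho>"
    unfolding id_star_base_def by (intro eq_matI) auto
  finally show ?thesis .
qed

lemma id_star_base_maximally_mixed:
  assumes "n > 0"
  shows "id_star_base n ((1 / of_nat n) \<cdot>\<^sub>m 1\<^sub>m n) = (1 / of_nat n) \<cdot>\<^sub>m swap_op n"
proof -
  have "mtrace ((1 / of_nat n) \<cdot>\<^sub>m 1\<^sub>m n) = 1"
    using assms by (simp add: mtrace_smult[of "1\<^sub>m n" n] mtrace_one)
  then show ?thesis
    by (intro eq_matI) (auto simp: id_star_base_index rho_hat_index div_less_of_less_mult mod_less_of_less_mult)
qed

lemma hermitian_id_star_base:
  assumes H: "hermitian n X"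
  shows "hermitian (n*n) (id_star_base n X)"
proof (rule hermitianI)
  have "hermitian n (rho_hat n X)"
    unfolding rho_hat_def using hermitian_mtrace_real[OF H]
    by (intro hermitian_diff[OF H] hermitian_smult) (auto simp: hermitian_def)
  note R = hermitianD(2)[OF this] and T = hermitian_mtrace_real[OF H]
  fix r c assume rc: "r < n*n" "c < n*n"
  then show "id_star_base n X $$ (c,r) = cnj (id_star_base n X $$ (r,c))"
    by (auto simp: id_star_base_index swap_op_def R T div_less_of_less_mult mod_less_of_less_mult)
qed simp


section \<open>A basis of density matrices\<close>

text \<open>\<open>herm_basis n (i,j)\<close> is the projection onto \<open>e\<^sub>i\<close> if \<open>i = j\<close>, onto
  \<open>(e\<^sub>i + e\<^sub>j)/\<surd>2\<close> if \<open>i < j\<close>, and onto \<open>(e\<^sub>j - \<i> e\<^sub>i)/\<surd>2\<close> if \<open>j < i\<close>.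
  These \<open>n\<^sup>2\<close> density matrices span all matrices, and \<open>herm_coord\<close> gives the coordinates,
  which are real for Hermitian matrices and sum to the trace.\<close>

definition index_pairs :: "nat \<Rightarrow> (nat \<times> nat) set" where
  "index_pairs n = {..<n} \<times> {..<n}"

definition herm_basis_entry :: "nat \<Rightarrow> nat \<Rightarrow> nat \<Rightarrow> nat \<Rightarrow> complex" where
  "herm_basis_entry i j r s =
    (if i = j then (if r = i \<and> s = i then 1 else 0)
     else if i < j then (if (r = i \<or> r = j) \<and> (s = i \<or> s = j) then 1/2 else 0)
     else if (r = i \<and> s = i) \<or> (r = j \<and> s = j) then 1/2
     else if r = j \<and> s = i then \<i>/2
     else if r = i \<and> s = j then -\<i>/2 else 0)"

definition herm_basis :: "nat \<Rightarrow> nat \<times> nat \<Rightarrow> cmat" where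
  "herm_basis n k = mat n n (\<lambda>(r,s). herm_basis_entry (fst k) (snd k) r s)"

definition pair_coord :: "cmat \<Rightarrow> nat \<Rightarrow> nat \<Rightarrow> complex" where
  "pair_coord X i j = (if i < j then X $$ (i,j) + X $$ (j,i) else - \<i> * (X $$ (j,i) - X $$ (i,j)))"

definition herm_coord :: "nat \<Rightarrow> cmat \<Rightarrow> nat \<times> nat \<Rightarrow> complex" where
  "herm_coord n X k =
    (if fst k = snd k
     then X $$ (fst k, fst k)
       - (1/2) * (\<Sum>l\<in>{..<n}-{fst k}. pair_coord X (fst k) l + pair_coord X l (fst k))
     else pair_coord X (fst k) (snd k))"

lemma finite_index_pairs [simp]: "finite (index_pairs n)"
  by (simp add: index_pairs_def)

lemma herm_basis_carrier [simp]: "herm_basis n k \<in> carrier_mat n n"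
  by (simp add: herm_basis_def)

lemma herm_basis_index [simp]:
  "r < n \<Longrightarrow> s < n \<Longrightarrow> herm_basis n k $$ (r,s) = herm_basis_entry (fst k) (snd k) r s"
  by (simp add: herm_basis_def)

lemma herm_coord_expansion_offdiag:
  assumes X: "X \<in> carrier_mat n n" and rs: "r < n" "s < n" "r \<noteq> s"
  shows "(\<Sum>k\<in>index_pairs n. herm_coord n X k * herm_basis_entry (fst k) (snd k) r s) = X $$ (r,s)"
proof -
  have "(\<Sum>k\<in>index_pairs n. herm_coord n X k * herm_basis_entry (fst k) (snd k) r s)
      = (\<Sum>k\<in>{(r,s),(s,r)}. herm_coord n X k * herm_basis_entry (fst k) (snd k) r s)"
  proof (rule sum.mono_neutral_right)
    show "\<forall>k\<in>index_pairs n - {(r,s),(s,r)}. herm_coord n X k * herm_basis_entry (fst k) (snd k) r s = 0"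
    proof
      fix k assume k: "k \<in> index_pairs n - {(r,s),(s,r)}"
      obtain i j where ij: "k = (i,j)" by fastforce
      have "herm_basis_entry i j r s = 0" using k rs(3) unfolding ij herm_basis_entry_def by auto
      then show "herm_coord n X k * herm_basis_entry (fst k) (snd k) r s = 0" by (simp add: ij)
    qed
  qed (use rs in \<open>auto simp: index_pairs_def\<close>)
  also have "\<dots> = herm_coord n X (r,s) * herm_basis_entry r s r s
      + herm_coord n X (s,r) * herm_basis_entry s r r s"
    using rs(3) by simp
  also have "\<dots> = X $$ (r,s)"
    using rs(3) by (cases "r < s") (simp_all add: herm_coord_def herm_basis_entry_def pair_coord_def field_simps)
  finally show ?thesis .
qed

lemma herm_coord_expansion_diag:
  assumes X: "X \<in> carrier_mat n n" and r: "r < n"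
  shows "(\<Sum>k\<in>index_pairs n. herm_coord n X k * herm_basis_entry (fst k) (snd k) r r) = X $$ (r,r)"
proof -
  define L where "L = {..<n} - {r}"
  define T where "T k = herm_coord n X k * herm_basis_entry (fst k) (snd k) r r" for k
  have fL: "finite L" unfolding L_def by simp
  have "(\<Sum>k\<in>index_pairs n. T k) = (\<Sum>k\<in>insert (r,r) ((\<lambda>l. (r,l)) ` L \<union> (\<lambda>l. (l,r)) ` L). T k)"
  proof (rule sum.mono_neutral_right)
    show "\<forall>k\<in>index_pairs n - insert (r,r) ((\<lambda>l. (r,l)) ` L \<union> (\<lambda>l. (l,r)) ` L). T k = 0"
    proof
      fix k assume k: "k \<in> index_pairs n - insert (r,r) ((\<lambda>l. (r,l)) ` L \<union> (\<lambda>l. (l,r)) ` L)"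
      obtain i j where ij: "k = (i,j)" by fastforce
      have "herm_basis_entry i j r r = 0" using k unfolding ij herm_basis_entry_def L_def index_pairs_def by auto
      then show "T k = 0" by (simp add: ij T_def)
    qed
  qed (use r in \<open>auto simp: index_pairs_def L_def\<close>)
  also have "\<dots> = T (r,r) + ((\<Sum>l\<in>L. T (r,l)) + (\<Sum>l\<in>L. T (l,r)))"
  proof -
    have d1: "(r,r) \<notin> (\<lambda>l. (r,l)) ` L \<union> (\<lambda>l. (l,r)) ` L" unfolding L_def by auto
    have d2: "(\<lambda>l. (r,l)) ` L \<inter> (\<lambda>l. (l,r)) ` L = {}" unfolding L_def by auto
    have i1: "inj_on (\<lambda>l. (r,l)) L" "inj_on (\<lambda>l. (l,r)) L" by (auto simp: inj_on_def)
    show ?thesis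
      using fL d1 d2 by (simp add: sum.union_disjoint sum.reindex[OF i1(1)] sum.reindex[OF i1(2)])
  qed
  also have "\<dots> = X $$ (r,r)"
  proof -
    have a: "T (r,r) = X $$ (r,r) - (1/2) * (\<Sum>l\<in>L. pair_coord X r l + pair_coord X l r)"
      unfolding T_def herm_coord_def herm_basis_entry_def L_def by simp
    have b: "(\<Sum>l\<in>L. T (r,l)) = (\<Sum>l\<in>L. pair_coord X r l / 2)"
      unfolding T_def herm_coord_def herm_basis_entry_def L_def by (intro sum.cong refl) auto
    have c: "(\<Sum>l\<in>L. T (l,r)) = (\<Sum>l\<in>L. pair_coord X l r / 2)"
      unfolding T_def herm_coord_def herm_basis_entry_def L_def by (intro sum.cong refl) auto
    show ?thesis unfolding a b c
      by (simp add: sum.distrib sum_divide_distrib[symmetric] field_simps)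
  qed
  finally show ?thesis unfolding T_def .
qed

lemma mat_comb_herm_basis:
  assumes X: "X \<in> carrier_mat n n"
  shows "X = mat_comb n (index_pairs n) (herm_coord n X) (herm_basis n)"
proof (rule eq_matI)
  let ?M = "mat_comb n (index_pairs n) (herm_coord n X) (herm_basis n)"
  fix r s assume "r < dim_row ?M" "s < dim_col ?M"
  then have rs: "r < n" "s < n" by auto
  then show "X $$ (r,s) = ?M $$ (r,s)"
    using herm_coord_expansion_offdiag[OF X rs] herm_coord_expansion_diag[OF X rs(1)]
    by (cases "r = s") auto
qed (use X in auto)

lemma herm_basis_entry_diag: "herm_basis_entry i i r s = (if r = i \<and> s = i then 1 else 0)"
  by (simp add: herm_basis_entry_def)

lemma herm_basis_entry_less:
  "i < j \<Longrightarrow> herm_basis_entry i j r s = (if (r = i \<or> r = j) \<and> (s = i \<or> s = j) then 1/2 else 0)"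
  by (simp add: herm_basis_entry_def)

lemma herm_basis_entry_greater:
  "j < i \<Longrightarrow> herm_basis_entry i j r s =
     (if (r = i \<and> s = i) \<or> (r = j \<and> s = j) then 1/2
      else if r = j \<and> s = i then \<i>/2 else if r = i \<and> s = j then -\<i>/2 else 0)"
  by (simp add: herm_basis_entry_def)

lemma herm_basis_entry_outside:
  assumes "r \<notin> {i,j} \<or> s \<notin> {i,j}"
  shows "herm_basis_entry i j r s = 0"
proof -
  have "\<not> (r = i \<and> s = i)" "\<not> (r = j \<and> s = j)" "\<not> (r = j \<and> s = i)" "\<not> (r = i \<and> s = j)"
    "\<not> ((r = i \<or> r = j) \<and> (s = i \<or> s = j))" using assms by auto
  then show ?thesis unfolding herm_basis_entry_def
    by (simp only: if_False de_Morgan_conj[symmetric] disj_not1 simp_thms if_cancel)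
qed

lemma density_herm_basis:
  assumes k: "k \<in> index_pairs n"
  shows "density n (herm_basis n k)"
proof -
  obtain i j where ij: "k = (i,j)" "i < n" "j < n" using k unfolding index_pairs_def by auto
  have S: "{i,j} \<subseteq> {..<n}" using ij by auto
  have q: "quad_form n (herm_basis n k) v = (\<Sum>r\<in>{i,j}. \<Sum>s\<in>{i,j}. cnj (v r) * herm_basis_entry i j r s * v s)"
    for v
  proof -
    have "quad_form n (herm_basis n k) v = (\<Sum>r\<in>{i,j}. \<Sum>s\<in>{i,j}. cnj (v r) * herm_basis n k $$ (r,s) * v s)"
      by (rule quad_form_restrict[OF S]) (auto simp: ij(1) herm_basis_entry_outside)
    also have "\<dots> = (\<Sum>r\<in>{i,j}. \<Sum>s\<in>{i,j}. cnj (v r) * herm_basis_entry i j r s * v s)"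
      using S by (intro sum.cong refl) (auto simp: ij(1))
    finally show ?thesis .
  qed
  text \<open>The quadratic form is \<open>|v\<^sub>i|\<^sup>2\<close>, \<open>|v\<^sub>i + v\<^sub>j|\<^sup>2/2\<close> or \<open>|v\<^sub>j + \<i> v\<^sub>i|\<^sup>2/2\<close>.\<close>
  have square: "\<exists>w. quad_form n (herm_basis n k) v = (if i = j then 1 else 1/2) * (cnj w * w)" for v
  proof (cases i j rule: linorder_cases)
    case equal
    then have "quad_form n (herm_basis n k) v = cnj (v i) * v i"
      unfolding q by (simp add: herm_basis_entry_diag)
    then show ?thesis using equal by (intro exI[of _ "v i"]) simp
  next
    case less
    then have "quad_form n (herm_basis n k) v = cnj (v i) * (1/2) * v i + cnj (v i) * (1/2) * v j
        + (cnj (v j) * (1/2) * v i + cnj (v j) * (1/2) * v j)"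
      unfolding q by (simp add: herm_basis_entry_less)
    also have "\<dots> = (1/2) * (cnj (v i + v j) * (v i + v j))" by (simp add: algebra_simps)
    finally show ?thesis using less by (intro exI[of _ "v i + v j"]) simp
  next
    case greater
    then have "quad_form n (herm_basis n k) v = cnj (v i) * (1/2) * v i + cnj (v i) * (-\<i>/2) * v j
        + (cnj (v j) * (\<i>/2) * v i + cnj (v j) * (1/2) * v j)"
      unfolding q by (simp add: herm_basis_entry_greater)
    also have "\<dots> = (1/2) * (cnj (v j + \<i> * v i) * (v j + \<i> * v i))" by (simp add: algebra_simps)
    finally show ?thesis using greater by (intro exI[of _ "v j + \<i> * v i"]) simp
  qed
  have "psd n (herm_basis n k)"
    unfolding psd_iff
  proof (intro conjI allI)
    fix v
    obtain w where w: "quad_form n (herm_basis n k) v = (if i = j then 1 else 1/2) * (cnj w * w)"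
      using square by blast
    have "Im (cnj w * w) = 0" "Re (cnj w * w) \<ge> 0" by (simp_all add: algebra_simps)
    then show "Im (quad_form n (herm_basis n k) v) = 0" "0 \<le> Re (quad_form n (herm_basis n k) v)"
      unfolding w by auto
  qed simp
  moreover have "mtrace (herm_basis n k) = 1"
  proof -
    have "mtrace (herm_basis n k) = (\<Sum>r<n. herm_basis_entry i j r r)"
      unfolding mtrace_carrier[OF herm_basis_carrier] by (intro sum.cong refl) (simp add: ij(1))
    also have "\<dots> = (\<Sum>r\<in>{i,j}. herm_basis_entry i j r r)"
      by (rule sum.mono_neutral_right) (use S herm_basis_entry_outside in auto)
    also have "\<dots> = 1"
      by (cases i j rule: linorder_cases)
         (simp_all add: herm_basis_entry_diag herm_basis_entry_less herm_basis_entry_greater)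
    finally show ?thesis .
  qed
  ultimately show ?thesis unfolding density_def by simp
qed

lemma sum_offdiag_swap:
  fixes g :: "nat \<Rightarrow> nat \<Rightarrow> complex"
  shows "(\<Sum>i<n. \<Sum>l\<in>{..<n}-{i}. g l i) = (\<Sum>i<n. \<Sum>l\<in>{..<n}-{i}. g i l)"
proof -
  have e: "\<And>i h. (\<Sum>l\<in>{..<n}-{i}. h l) = (\<Sum>l<n. if l = i then 0 else h l)"
    by (rule sum.mono_neutral_cong_left) auto
  have "(\<Sum>i<n. \<Sum>l\<in>{..<n}-{i}. g l i) = (\<Sum>i<n. \<Sum>l<n. if l = i then 0 else g l i)" by (simp only: e)
  also have "\<dots> = (\<Sum>l<n. \<Sum>i<n. if l = i then 0 else g l i)" by (rule sum.swap)
  also have "\<dots> = (\<Sum>i<n. \<Sum>l<n. if l = i then 0 else g i l)" by (intro sum.cong refl) auto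
  also have "\<dots> = (\<Sum>i<n. \<Sum>l\<in>{..<n}-{i}. g i l)" by (simp only: e)
  finally show ?thesis .
qed

lemma sum_herm_coord:
  assumes X: "X \<in> carrier_mat n n"
  shows "(\<Sum>k\<in>index_pairs n. herm_coord n X k) = mtrace X"
proof -
  define A where "A = (\<Sum>i<n. \<Sum>l\<in>{..<n}-{i}. pair_coord X i l)"
  have A2: "(\<Sum>i<n. \<Sum>l\<in>{..<n}-{i}. pair_coord X l i) = A"
    unfolding A_def by (rule sum_offdiag_swap)
  have "(\<Sum>k\<in>index_pairs n. herm_coord n X k) = (\<Sum>i<n. \<Sum>j<n. herm_coord n X (i,j))"
    unfolding index_pairs_def by (simp add: sum.cartesian_product)
  also have "\<dots> = (\<Sum>i<n. herm_coord n X (i,i) + (\<Sum>l\<in>{..<n}-{i}. pair_coord X i l))"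
  proof (intro sum.cong refl)
    fix i assume i: "i \<in> {..<n}"
    have "(\<Sum>j<n. herm_coord n X (i,j))
        = herm_coord n X (i,i) + (\<Sum>j\<in>{..<n}-{i}. herm_coord n X (i,j))"
      using i by (simp add: sum.remove)
    also have "(\<Sum>j\<in>{..<n}-{i}. herm_coord n X (i,j)) = (\<Sum>l\<in>{..<n}-{i}. pair_coord X i l)"
      by (intro sum.cong refl) (auto simp: herm_coord_def)
    finally show "(\<Sum>j<n. herm_coord n X (i,j))
        = herm_coord n X (i,i) + (\<Sum>l\<in>{..<n}-{i}. pair_coord X i l)" .
  qed
  also have "\<dots> = (\<Sum>i<n. X $$ (i,i)) - (1/2) * (A + A) + A"
  proof -
    define S where "S i = (\<Sum>l\<in>{..<n}-{i}. pair_coord X i l)" for i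
    define T where "T i = (\<Sum>l\<in>{..<n}-{i}. pair_coord X l i)" for i
    have b: "\<And>i. herm_coord n X (i,i) = X $$ (i,i) - (1/2) * (S i + T i)"
      unfolding S_def T_def by (simp add: herm_coord_def sum.distrib)
    have "(\<Sum>i<n. herm_coord n X (i,i) + (\<Sum>l\<in>{..<n}-{i}. pair_coord X i l))
        = (\<Sum>i<n. X $$ (i,i) - (1/2) * (S i + T i) + S i)"
      by (simp only: b S_def)
    also have "\<dots> = (\<Sum>i<n. X $$ (i,i)) - (1/2) * (sum S {..<n} + sum T {..<n}) + sum S {..<n}"
      by (simp add: sum.distrib sum_subtractf sum_divide_distrib[symmetric])
    also have "sum S {..<n} = A" unfolding S_def A_def ..
    also have "sum T {..<n} = A" unfolding T_def using A2 .
    finally show ?thesis .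
  qed
  also have "\<dots> = mtrace X" using X by (simp add: mtrace_carrier)
  finally show ?thesis .
qed

lemma pair_coord_real:
  assumes H: "hermitian n X" and ij: "i < n" "j < n"
  shows "Im (pair_coord X i j) = 0"
proof -
  note h = hermitianD[OF H]
  show ?thesis
  proof (cases "i < j")
    case True
    have "X $$ (j,i) = cnj (X $$ (i,j))" using h(2)[OF ij] by simp
    then show ?thesis using True by (simp add: pair_coord_def)
  next
    case False
    have "X $$ (i,j) = cnj (X $$ (j,i))" using h(2)[OF ij(2) ij(1)] by simp
    then show ?thesis using False by (simp add: pair_coord_def)
  qed
qed

lemma herm_coord_real:
  assumes H: "hermitian n X" and k: "k \<in> index_pairs n"
  shows "Im (herm_coord n X k) = 0"
proof -
  note h = hermitianD[OF H]
  obtain i j where ij: "k = (i,j)" "i < n" "j < n" using k unfolding index_pairs_def by auto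
  show ?thesis
  proof (cases "i = j")
    case True
    have d: "Im (X $$ (i,i)) = 0" using h(2)[OF ij(2) ij(2)] by (simp add: complex_eq_iff)
    have s: "Im (\<Sum>l\<in>{..<n}-{i}. pair_coord X i l + pair_coord X l i) = 0"
      unfolding Im_sum by (intro sum.neutral) (use pair_coord_real[OF H] ij in auto)
    show ?thesis using True d s ij by (simp add: herm_coord_def)
  next
    case False
    then show ?thesis using pair_coord_real[OF H ij(2,3)] ij by (simp add: herm_coord_def)
  qed
qed

lemma pair_coord_add:
  "X \<in> carrier_mat n n \<Longrightarrow> Y \<in> carrier_mat n n \<Longrightarrow> i < n \<Longrightarrow> j < n \<Longrightarrow>
     pair_coord (X + Y) i j = pair_coord X i j + pair_coord Y i j"
  and pair_coord_smult:
  "X \<in> carrier_mat n n \<Longrightarrow> i < n \<Longrightarrow> j < n \<Longrightarrow> pair_coord (a \<cdot>\<^sub>m X) i j = a * pair_coord X i j"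
  by (simp_all add: pair_coord_def algebra_simps)

lemma herm_coord_add:
  assumes X: "X \<in> carrier_mat n n" and Y: "Y \<in> carrier_mat n n" and k: "k \<in> index_pairs n"
  shows "herm_coord n (X + Y) k = herm_coord n X k + herm_coord n Y k"
proof -
  obtain i j where ij: "k = (i,j)" "i < n" "j < n" using k unfolding index_pairs_def by auto
  have s: "(\<Sum>l\<in>{..<n}-{i}. pair_coord (X+Y) i l + pair_coord (X+Y) l i)
      = (\<Sum>l\<in>{..<n}-{i}. pair_coord X i l + pair_coord X l i)
        + (\<Sum>l\<in>{..<n}-{i}. pair_coord Y i l + pair_coord Y l i)"
    unfolding sum.distrib[symmetric] by (intro sum.cong refl) (use X Y ij in \<open>auto simp: pair_coord_add\<close>)
  show ?thesis
    unfolding herm_coord_def ij(1) fst_conv snd_conv s using X Y ij by (auto simp: pair_coord_add algebra_simps)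
qed

lemma herm_coord_smult:
  assumes X: "X \<in> carrier_mat n n" and k: "k \<in> index_pairs n"
  shows "herm_coord n (a \<cdot>\<^sub>m X) k = a * herm_coord n X k"
proof -
  obtain i j where ij: "k = (i,j)" "i < n" "j < n" using k unfolding index_pairs_def by auto
  have s: "(\<Sum>l\<in>{..<n}-{i}. pair_coord (a \<cdot>\<^sub>m X) i l + pair_coord (a \<cdot>\<^sub>m X) l i)
      = a * (\<Sum>l\<in>{..<n}-{i}. pair_coord X i l + pair_coord X l i)"
    unfolding sum_distrib_left
    by (intro sum.cong refl) (use X ij in \<open>auto simp: pair_coord_smult algebra_simps\<close>)
  show ?thesis
    unfolding herm_coord_def ij(1) fst_conv snd_conv s using X ij by (auto simp: pair_coord_smult algebra_simps)
qed


section \<open>Axiom (E) forces mixtures to be preserved\<close>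

definition entry_map :: "nat \<Rightarrow> cmap" where
  "entry_map a Y = mat 1 1 (\<lambda>_. Y $$ (a,a))"

definition trace_map :: cmap where
  "trace_map Y = mat 1 1 (\<lambda>_. mtrace Y)"

definition scale_map :: "real \<Rightarrow> cmap" where
  "scale_map p Y = complex_of_real p \<cdot>\<^sub>m Y"

lemma app2_entry_map: "a < m \<Longrightarrow> app2 k m 1 (entry_map a) X = mat k k (\<lambda>(r,c). X $$ (r*m+a, c*m+a))"
  by (rule eq_matI) (auto simp: app2_index entry_map_def)

lemma app2_trace_map_qubit:
  "app2 k 2 1 trace_map X = app2 k 2 1 (entry_map 0) X + app2 k 2 1 (entry_map 1) X"
  by (rule eq_matI) (auto simp: app2_index trace_map_def entry_map_def mtrace_carrier[OF block_at_carrier]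
      numeral_2_eq_2 lessThan_Suc)

lemma app2_scale_map:
  "X \<in> carrier_mat (k*n) (k*n) \<Longrightarrow> app2 k n n (scale_map p) X = complex_of_real p \<cdot>\<^sub>m X"
  by (rule eq_matI) (auto simp: app2_index scale_map_def div_less_of_less_mult mod_less_of_less_mult)

lemma psd_diag_le_mtrace:
  assumes "psd n X" "a < n"
  shows "Re (X $$ (a,a)) \<le> Re (mtrace X)"
  unfolding mtrace_carrier[OF psd_carrier[OF assms(1)]] Re_sum
  by (rule member_le_sum) (use assms psd_diag in auto)

lemma psd_mtrace_nonneg: "psd n X \<Longrightarrow> Re (mtrace X) \<ge> 0"
  unfolding mtrace_carrier[OF psd_carrier] Re_sum by (auto intro: sum_nonneg psd_diag)

lemma cp_tni_entry_map:
  assumes "a < m"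
  shows "cp_tni m 1 (entry_map a)"
  unfolding cp_tni_def completely_positive_def
proof (intro conjI allI impI)
  show "linear_on m 1 (entry_map a)"
    unfolding linear_on_def using assms by (auto simp: entry_map_def mat_eq_iff)
  fix k and X :: cmat assume "psd (k*m) X"
  moreover have "inj_on (\<lambda>r. r*m+a) {..<k}" "(\<lambda>r. r*m+a) ` {..<k} \<subseteq> {..<k*m}"
    using assms by (auto simp: inj_on_def mult_add_less_mult)
  ultimately show "psd (k*1) (app2 k m 1 (entry_map a) X)"
    unfolding app2_entry_map[OF assms] using psd_compress by simp
next
  fix X assume "psd m X"
  then show "Re (mtrace (entry_map a X)) \<le> Re (mtrace X)"
    using psd_diag_le_mtrace[OF _ assms] by (simp add: entry_map_def mtrace_def)
qed

lemma cp_tni_trace_map: "cp_tni 2 1 trace_map"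
  unfolding cp_tni_def completely_positive_def
proof (intro conjI allI impI)
  show "linear_on 2 1 trace_map"
    unfolding linear_on_def by (auto simp: trace_map_def mtrace_add mtrace_smult)
  fix k and X :: cmat assume "k > 0" "psd (k*2) X"
  then show "psd (k*1) (app2 k 2 1 trace_map X)"
    using cp_tni_entry_map[of 0 2] cp_tni_entry_map[of 1 2] unfolding app2_trace_map_qubit
    by (intro psd_add) (auto simp: cp_tni_def completely_positive_def)
qed (simp add: trace_map_def mtrace_def)

lemma cp_tni_scale_map:
  assumes "0 \<le> p" "p \<le> 1"
  shows "cp_tni n n (scale_map p)"
  unfolding cp_tni_def completely_positive_def
proof (intro conjI allI impI)
  show "linear_on n n (scale_map p)"
    unfolding linear_on_def by (auto simp: scale_map_def mat_eq_iff algebra_simps)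
  fix k and X :: cmat assume "psd (k*n) X"
  then show "psd (k*n) (app2 k n n (scale_map p) X)"
    using assms by (simp add: app2_scale_map psd_carrier psd_smult)
next
  fix X assume "psd n X"
  then show "Re (mtrace (scale_map p X)) \<le> Re (mtrace X)"
    using assms psd_mtrace_nonneg[of n X]
    by (simp add: scale_map_def mtrace_smult[OF psd_carrier] mult_left_le_one_le)
qed

lemma psd_kron_mat_unit:
  assumes X: "psd n X" and a: "a < m"
  shows "psd (n*m) (kron n m X (mat_unit m a a))"
proof (rule psd_embed[OF X])
  let ?g = "\<lambda>r. r*m + a"
  show "inj_on ?g {..<n}" using a by (auto simp: inj_on_def)
  show "?g ` {..<n} \<subseteq> {..<n*m}" using a by (auto simp: mult_add_less_mult)
  show "kron n m X (mat_unit m a a) \<in> carrier_mat (n*m) (n*m)" by simp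
  show "kron n m X (mat_unit m a a) $$ (r,c) = 0"
    if rc: "r < n*m" "c < n*m" and out: "r \<notin> ?g ` {..<n} \<or> c \<notin> ?g ` {..<n}" for r c
  proof -
    have "t mod m \<noteq> a" if "t < n*m" "t \<notin> ?g ` {..<n}" for t
    proof
      assume "t mod m = a"
      then have "t = ?g (t div m)" by (metis div_mult_mod_eq)
      moreover have "t div m < n" using that(1) by (rule div_less_of_less_mult)
      ultimately show False using that(2) by blast
    qed
    then have "r mod m \<noteq> a \<or> c mod m \<noteq> a" using rc out by blast
    then show ?thesis using rc by (auto simp: mat_unit_def mod_less_of_less_mult)
  qed
  show "kron n m X (mat_unit m a a) $$ (?g r, ?g c) = X $$ (r,c)" if "r < n" "c < n" for r c
    using that a by (simp add: mat_unit_def mult_add_less_mult)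
qed

definition block_mix :: "nat \<Rightarrow> real \<Rightarrow> cmat \<Rightarrow> cmat \<Rightarrow> cmat" where
  "block_mix n p \<rho>1 \<rho>2 = kron n 2 (complex_of_real p \<cdot>\<^sub>m \<rho>1) (mat_unit 2 0 0)
                         + kron n 2 (complex_of_real (1-p) \<cdot>\<^sub>m \<rho>2) (mat_unit 2 1 1)"

lemma density_block_mix:
  assumes d: "density n \<rho>1" "density n \<rho>2" and p: "0 \<le> p" "p \<le> 1"
  shows "density (n*2) (block_mix n p \<rho>1 \<rho>2)"
proof -
  have c: "\<rho>1 \<in> carrier_mat n n" "\<rho>2 \<in> carrier_mat n n" using d by (simp_all add: density_carrier)
  have unit: "mat_unit 2 a a \<in> carrier_mat 2 2" "mtrace (mat_unit 2 a a) = 1" if "a < 2" for a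
    using that by (auto simp: mtrace_def mat_unit_def numeral_2_eq_2 lessThan_Suc)
  have "psd (n*2) (block_mix n p \<rho>1 \<rho>2)"
    unfolding block_mix_def using d p
    by (intro psd_add psd_kron_mat_unit psd_smult) (auto simp: density_def)
  moreover have "mtrace (block_mix n p \<rho>1 \<rho>2) = 1"
    unfolding block_mix_def using d c unit[of 0] unit[of 1]
    by (simp add: mtrace_add[of _ "n*2"] mtrace_kron mtrace_smult[of _ n] density_def)
  ultimately show ?thesis unfolding density_def by simp
qed

lemma app2_entry_map_block_mix:
  assumes "\<rho>1 \<in> carrier_mat n n" "\<rho>2 \<in> carrier_mat n n"
  shows "app2 n 2 1 (entry_map 0) (block_mix n p \<rho>1 \<rho>2) = complex_of_real p \<cdot>\<^sub>m \<rho>1"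
    and "app2 n 2 1 (entry_map 1) (block_mix n p \<rho>1 \<rho>2) = complex_of_real (1-p) \<cdot>\<^sub>m \<rho>2"
proof -
  have two: "(0::nat) < 2" "(1::nat) < 2" by simp_all
  show "app2 n 2 1 (entry_map 0) (block_mix n p \<rho>1 \<rho>2) = complex_of_real p \<cdot>\<^sub>m \<rho>1"
    unfolding app2_entry_map[OF two(1)]
    by (rule eq_matI) (use assms in \<open>auto simp: block_mix_def mat_unit_def mult_add_less_mult\<close>)
  show "app2 n 2 1 (entry_map 1) (block_mix n p \<rho>1 \<rho>2) = complex_of_real (1-p) \<cdot>\<^sub>m \<rho>2"
    unfolding app2_entry_map[OF two(2)]
    by (rule eq_matI) (use assms in \<open>auto simp: block_mix_def mat_unit_def mult_add_less_mult\<close>)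
qed

lemma axiom_E_withD:
  assumes "axiom_E_with star ext" and nm: "n > 0" "m > 0" and E: "channel n m E"
  shows "density n \<rho> \<Longrightarrow> ext n m 1 E \<rho> = star n m E \<rho>"
    and "e > 0 \<Longrightarrow> qsst star n e X \<Longrightarrow> ext n m e E X \<in> carrier_mat (n*m*e) (n*m*e)"
    and "e > 0 \<Longrightarrow> qsst star n e X \<Longrightarrow> e' > 0 \<Longrightarrow> cp_tni e e' I \<Longrightarrow>
           app2 (n*m) e e' I (ext n m e E X) = ext n m e' E (app2 n e e' I X)"
    and "e > 0 \<Longrightarrow> qsst star n e X \<Longrightarrow> ptr1 n (m*e) (ext n m e E X) = app1 n m e E X"
proof -
  note parts = assms(1)[unfolded axiom_E_with_def, THEN conjunct1, rule_format]
    assms(1)[unfolded axiom_E_with_def, THEN conjunct2, rule_format, OF nm _ conjI[OF E]]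
  show "density n \<rho> \<Longrightarrow> ext n m 1 E \<rho> = star n m E \<rho>"
    using parts(1)[OF nm conjI[OF E]] .
  assume "e > 0" "qsst star n e X"
  note P = parts(2)[OF this]
  show "ext n m e E X \<in> carrier_mat (n*m*e) (n*m*e)" using P by (rule conjunct1)
  show "ptr1 n (m*e) (ext n m e E X) = app1 n m e E X" using P by (rule conjunct2[THEN conjunct2])
  show "e' > 0 \<Longrightarrow> cp_tni e e' I \<Longrightarrow> app2 (n*m) e e' I (ext n m e E X) = ext n m e' E (app2 n e e' I X)"
    using P[THEN conjunct2, THEN conjunct1, rule_format] .
qed

text \<open>The mixture is realised as the marginal of a state on \<open>A \<otimes> qubit\<close> which is block diagonal
  in the qubit; by (E), \<open>E \<star> \<cdot>\<close> commutes with the operations on the qubit that read off the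
  marginal and the two weighted blocks.\<close>
lemma star_mixture:
  assumes AE: "axiom_E_with star ext" and S: "state_over_time_function star"
    and n: "n > 0" and m: "m > 0" and E: "channel n m E"
    and d: "density n \<rho>1" "density n \<rho>2" and p: "0 \<le> p" "p \<le> 1"
  shows "star n m E (complex_of_real p \<cdot>\<^sub>m \<rho>1 + complex_of_real (1-p) \<cdot>\<^sub>m \<rho>2)
     = complex_of_real p \<cdot>\<^sub>m star n m E \<rho>1 + complex_of_real (1-p) \<cdot>\<^sub>m star n m E \<rho>2"
proof -
  note rules = axiom_E_withD[OF AE n m E]
  define X where "X = block_mix n p \<rho>1 \<rho>2"
  define Z where "Z = ext n m 2 E X"
  have c: "\<rho>1 \<in> carrier_mat n n" "\<rho>2 \<in> carrier_mat n n" using d by (simp_all add: density_carrier)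
  have qX: "qsst star n 2 X" using density_block_mix[OF d p] unfolding qsst_def X_def by simp
  have block: "app2 (n*m) 2 1 (entry_map a) Z = complex_of_real q \<cdot>\<^sub>m star n m E \<sigma>"
    if "a < 2" "app2 n 2 1 (entry_map a) X = complex_of_real q \<cdot>\<^sub>m \<sigma>" "density n \<sigma>" "0 \<le> q" "q \<le> 1"
    for a q \<sigma>
  proof -
    have q\<sigma>: "qsst star n 1 \<sigma>" using that(3) unfolding qsst_def by simp
    have \<sigma>: "\<sigma> \<in> carrier_mat (n*1) (n*1)" using density_carrier[OF that(3)] by simp
    have "app2 (n*m) 2 1 (entry_map a) Z = ext n m 1 E (app2 n 2 1 (entry_map a) X)"
      unfolding Z_def by (rule rules(3)[OF _ qX _ cp_tni_entry_map[OF that(1)]]) simp_all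
    also have "\<dots> = ext n m 1 E (app2 n 1 1 (scale_map q) \<sigma>)"
      unfolding that(2) app2_scale_map[OF \<sigma>] ..
    also have "\<dots> = app2 (n*m) 1 1 (scale_map q) (ext n m 1 E \<sigma>)"
      by (rule rules(3)[OF _ q\<sigma> _ cp_tni_scale_map[OF that(4,5)], symmetric]) simp_all
    also have "\<dots> = complex_of_real q \<cdot>\<^sub>m star n m E \<sigma>"
      unfolding rules(1)[OF that(3)]
      by (rule app2_scale_map) (use S n m E that(3) in \<open>simp add: state_over_time_function_def\<close>)
    finally show ?thesis .
  qed
  have mix: "complex_of_real p \<cdot>\<^sub>m \<rho>1 + complex_of_real (1-p) \<cdot>\<^sub>m \<rho>2 = app2 n 2 1 trace_map X"
    unfolding app2_trace_map_qubit X_def app2_entry_map_block_mix[OF c] ..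
  have "star n m E (complex_of_real p \<cdot>\<^sub>m \<rho>1 + complex_of_real (1-p) \<cdot>\<^sub>m \<rho>2)
      = ext n m 1 E (app2 n 2 1 trace_map X)"
    unfolding mix[symmetric] by (rule rules(1)[OF density_mix[OF d p], symmetric])
  also have "\<dots> = app2 (n*m) 2 1 trace_map Z"
    unfolding Z_def by (rule rules(3)[OF _ qX _ cp_tni_trace_map, symmetric]) simp_all
  also have "\<dots> = app2 (n*m) 2 1 (entry_map 0) Z + app2 (n*m) 2 1 (entry_map 1) Z"
    by (rule app2_trace_map_qubit)
  finally show ?thesis
    using block[of 0 p \<rho>1] block[of 1 "1-p" \<rho>2] d p app2_entry_map_block_mix[OF c]
    unfolding X_def by simp
qed


section \<open>Mixture-preserving maps are affine on states\<close>

locale mixture_preserving =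
  fixes f :: "cmat \<Rightarrow> cmat" and n d :: nat
  assumes mix: "\<And>\<rho>1 \<rho>2 p. density n \<rho>1 \<Longrightarrow> density n \<rho>2 \<Longrightarrow> 0 \<le> p \<Longrightarrow> p \<le> 1 \<Longrightarrow>
      f (complex_of_real p \<cdot>\<^sub>m \<rho>1 + complex_of_real (1-p) \<cdot>\<^sub>m \<rho>2)
        = complex_of_real p \<cdot>\<^sub>m f \<rho>1 + complex_of_real (1-p) \<cdot>\<^sub>m f \<rho>2"
    and carrier: "\<And>\<rho>. density n \<rho> \<Longrightarrow> f \<rho> \<in> carrier_mat d d"
begin

lemma convex_comb:
  assumes "finite K" "\<forall>k\<in>K. density n (\<sigma> k)" "\<forall>k\<in>K. w k \<ge> 0" "sum w K = 1"
  shows "density n (mat_comb n K (\<lambda>k. complex_of_real (w k)) \<sigma>) \<and>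
    f (mat_comb n K (\<lambda>k. complex_of_real (w k)) \<sigma>)
      = mat_comb d K (\<lambda>k. complex_of_real (w k)) (\<lambda>k. f (\<sigma> k))"
  using assms
proof (induction K arbitrary: w rule: finite_induct)
  case (insert a K)
  have \<sigma>a: "density n (\<sigma> a)" and ca: "\<sigma> a \<in> carrier_mat n n" and fa: "f (\<sigma> a) \<in> carrier_mat d d"
    using insert.prems(1) density_carrier carrier by auto
  have wK: "w a + sum w K = 1" "sum w K \<ge> 0" using insert by (auto intro: sum_nonneg)
  show ?case
  proof (cases "w a = 1")
    case True
    then have "\<And>k. k \<in> K \<Longrightarrow> complex_of_real (w k) = 0"
      using wK sum_nonneg_eq_0_iff[OF insert.hyps(1)] insert.prems(2) by auto
    note zero = this
    have "mat_comb n (insert a K) (\<lambda>k. complex_of_real (w k)) \<sigma> = \<sigma> a"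
      by (rule eq_matI) (use insert.hyps True ca zero in simp_all)
    moreover have "mat_comb d (insert a K) (\<lambda>k. complex_of_real (w k)) (\<lambda>k. f (\<sigma> k)) = f (\<sigma> a)"
      by (rule eq_matI) (use insert.hyps True fa zero in simp_all)
    ultimately show ?thesis using \<sigma>a by simp
  next
    case False
    have q: "1 - w a > 0" "0 \<le> w a" "w a \<le> 1" using wK insert.prems(2) False by auto
    define w' where "w' k = w k / (1 - w a)" for k
    have IH: "density n (mat_comb n K (\<lambda>k. complex_of_real (w' k)) \<sigma>) \<and>
      f (mat_comb n K (\<lambda>k. complex_of_real (w' k)) \<sigma>)
        = mat_comb d K (\<lambda>k. complex_of_real (w' k)) (\<lambda>k. f (\<sigma> k))"
      using insert.IH[of w'] insert.prems q wK unfolding w'_def by (simp add: sum_divide_distrib[symmetric])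
    have rescale: "mat_comb e K (\<lambda>k. complex_of_real (w k)) M
        = complex_of_real (1 - w a) \<cdot>\<^sub>m mat_comb e K (\<lambda>k. complex_of_real (w' k)) M" for e M
      unfolding mat_comb_smult[symmetric] by (rule mat_comb_cong) (use q in \<open>auto simp: w'_def\<close>)
    show ?thesis
      unfolding mat_comb_insert[where M = \<sigma>, OF insert.hyps(1,2) ca]
        mat_comb_insert[where M = "\<lambda>k. f (\<sigma> k)", OF insert.hyps(1,2) fa] rescale
      using IH mix[OF \<sigma>a _ q(2,3)] density_mix[OF \<sigma>a _ q(2,3)] by simp
  qed
qed simp

lemma affine_comb:
  assumes K: "finite K" and \<sigma>: "\<forall>k\<in>K. density n (\<sigma> k)" and c: "sum c K = 1"
    and \<rho>: "density n \<rho>" and \<rho>_eq: "\<rho> = mat_comb n K (\<lambda>k. complex_of_real (c k)) \<sigma>"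
  shows "f \<rho> = mat_comb d K (\<lambda>k. complex_of_real (c k)) (\<lambda>k. f (\<sigma> k))"
proof -
  define P where "P = {k\<in>K. c k \<ge> 0}"
  define N where "N = {k\<in>K. c k < 0}"
  have fin: "finite P" "finite N" using K unfolding P_def N_def by auto
  have KPN: "K = P \<union> N" "P \<inter> N = {}" unfolding P_def N_def by auto
  have split: "sum g K = sum g P + sum g N" for g :: "_ \<Rightarrow> 'b::comm_monoid_add"
    unfolding KPN(1) using sum.union_disjoint[OF fin KPN(2)] .
  define s where "s = sum c P"
  have "sum c N \<le> 0" unfolding N_def by (intro sum_nonpos) auto
  then have s: "s > 0" "sum c N = 1 - s" using c split[of c] unfolding s_def by auto
  text \<open>\<open>(1/s) \<rho> + \<Sum>\<^sub>k\<^sub>\<in>\<^sub>N (-c\<^sub>k/s) \<sigma>\<^sub>k\<close> and \<open>\<Sum>\<^sub>k\<^sub>\<in>\<^sub>P (c\<^sub>k/s) \<sigma>\<^sub>k\<close> are the same convex combination.\<close>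
  define J where "J = insert None (Some ` N)"
  define \<tau> where "\<tau> x = (case x of None \<Rightarrow> \<rho> | Some k \<Rightarrow> \<sigma> k)" for x
  define v where "v x = (case x of None \<Rightarrow> 1 / s | Some k \<Rightarrow> - c k / s)" for x
  have sumJ: "sum g J = g None + (\<Sum>k\<in>N. g (Some k))" for g :: "_ \<Rightarrow> 'b::comm_monoid_add"
    unfolding J_def using fin by (simp add: sum.reindex)
  have "f (mat_comb n J (\<lambda>x. complex_of_real (v x)) \<tau>)
      = mat_comb d J (\<lambda>x. complex_of_real (v x)) (\<lambda>x. f (\<tau> x))"
    using convex_comb[of J \<tau> v] fin \<sigma> \<rho> s unfolding J_def \<tau>_def v_def N_def
    by (auto simp: sum.reindex sum_divide_distrib[symmetric] sum_negf divide_nonpos_pos field_simps)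
  moreover have "f (mat_comb n P (\<lambda>k. complex_of_real (c k / s)) \<sigma>)
      = mat_comb d P (\<lambda>k. complex_of_real (c k / s)) (\<lambda>k. f (\<sigma> k))"
    using convex_comb[of P \<sigma> "\<lambda>k. c k / s"] fin \<sigma> s unfolding P_def s_def
    by (auto simp: sum_divide_distrib[symmetric])
  moreover have "mat_comb n J (\<lambda>x. complex_of_real (v x)) \<tau>
      = mat_comb n P (\<lambda>k. complex_of_real (c k / s)) \<sigma>"
  proof (rule eq_matI)
    fix r t assume "r < dim_row (mat_comb n P (\<lambda>k. complex_of_real (c k / s)) \<sigma>)"
      "t < dim_col (mat_comb n P (\<lambda>k. complex_of_real (c k / s)) \<sigma>)"
    then have rt: "r < n" "t < n" by auto
    then have "\<rho> $$ (r,t) = (\<Sum>k\<in>P. complex_of_real (c k) * \<sigma> k $$ (r,t))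
        + (\<Sum>k\<in>N. complex_of_real (c k) * \<sigma> k $$ (r,t))"
      using \<rho>_eq split by simp
    then show "mat_comb n J (\<lambda>x. complex_of_real (v x)) \<tau> $$ (r,t)
        = mat_comb n P (\<lambda>k. complex_of_real (c k / s)) \<sigma> $$ (r,t)"
      using rt s by (simp add: sumJ v_def \<tau>_def sum_distrib_left[symmetric] sum_divide_distrib[symmetric]
          field_simps sum_negf)
  qed simp_all
  ultimately have "mat_comb d J (\<lambda>x. complex_of_real (v x)) (\<lambda>x. f (\<tau> x))
      = mat_comb d P (\<lambda>k. complex_of_real (c k / s)) (\<lambda>k. f (\<sigma> k))"
    by simp
  show ?thesis
  proof (rule eq_matI)
    fix r t assume "r < dim_row (mat_comb d K (\<lambda>k. complex_of_real (c k)) (\<lambda>k. f (\<sigma> k)))"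
      "t < dim_col (mat_comb d K (\<lambda>k. complex_of_real (c k)) (\<lambda>k. f (\<sigma> k)))"
    then have rt: "r < d" "t < d" by auto
    define A where "A = (\<Sum>k\<in>P. complex_of_real (c k) * f (\<sigma> k) $$ (r,t))"
    define B where "B = (\<Sum>k\<in>N. complex_of_real (c k) * f (\<sigma> k) $$ (r,t))"
    have "complex_of_real (1/s) * f \<rho> $$ (r,t) + (\<Sum>k\<in>N. complex_of_real (- c k / s) * f (\<sigma> k) $$ (r,t))
        = (\<Sum>k\<in>P. complex_of_real (c k / s) * f (\<sigma> k) $$ (r,t))"
      using arg_cong[OF \<open>mat_comb d J _ _ = _\<close>, of "\<lambda>M. M $$ (r,t)"] rt by (simp add: sumJ v_def \<tau>_def)
    also have "(\<Sum>k\<in>N. complex_of_real (- c k / s) * f (\<sigma> k) $$ (r,t)) = - B / complex_of_real s"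
      unfolding B_def sum_divide_distrib sum_negf[symmetric] by (rule sum.cong) auto
    also have "(\<Sum>k\<in>P. complex_of_real (c k / s) * f (\<sigma> k) $$ (r,t)) = A / complex_of_real s"
      unfolding A_def sum_divide_distrib by (rule sum.cong) auto
    finally have "f \<rho> $$ (r,t) = A + B" using s by (simp add: field_simps)
    then show "f \<rho> $$ (r,t) = mat_comb d K (\<lambda>k. complex_of_real (c k)) (\<lambda>k. f (\<sigma> k)) $$ (r,t)"
      using rt unfolding A_def B_def KPN(1) by (simp add: sum.union_disjoint[OF fin KPN(2)])
  qed (use carrier[OF \<rho>] in auto)
qed

end


section \<open>From the axioms to the characterising form\<close>

lemma state_over_time_functionD:
  assumes "state_over_time_function star" "n > 0" "m > 0" "channel n m E" "density n \<rho>"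
  shows "star n m E \<rho> \<in> carrier_mat (n*m) (n*m)"
    and "ptr1 n m (star n m E \<rho>) = E \<rho>" and "ptr2 n m (star n m E \<rho>) = \<rho>"
  using assms unfolding state_over_time_function_def by blast+

text \<open>\<open>Xi_of star n\<close> is the \<open>\<Xi>\<close> of the characterisation, read off from \<open>id \<star> \<cdot>\<close> on \<open>herm_basis\<close>.\<close>
definition id_star_lin :: "sotf \<Rightarrow> nat \<Rightarrow> cmap" where
  "id_star_lin star n X =
     mat_comb (n*n) (index_pairs n) (herm_coord n X) (\<lambda>k. star n n id (herm_basis n k))"

definition Xi_of :: "sotf \<Rightarrow> nat \<Rightarrow> cmap" where
  "Xi_of star n X = id_star_lin star n X - id_star_base n X"

lemma linear_on_id_star_lin: "linear_on n (n*n) (id_star_lin star n)"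
  unfolding linear_on_def id_star_lin_def
  by (auto simp: herm_coord_add herm_coord_smult mat_eq_iff sum.distrib sum_distrib_left
      distrib_right mult.assoc intro!: sum.cong)

lemma linear_on_Xi_of: "linear_on n (n*n) (Xi_of star n)"
  unfolding Xi_of_def[abs_def]
  by (rule linear_on_diff_maps[OF linear_on_id_star_lin linear_on_id_star_base])

lemma id_star_lin_density:
  assumes S: "state_over_time_function star" and AE: "axiom_E_with star ext"
    and n: "n > 0" and \<rho>: "density n \<rho>"
  shows "id_star_lin star n \<rho> = star n n id \<rho>"
proof -
  interpret mixture_preserving "star n n id" n "n*n"
  proof
    show "star n n id (complex_of_real p \<cdot>\<^sub>m \<rho>1 + complex_of_real (1-p) \<cdot>\<^sub>m \<rho>2)
        = complex_of_real p \<cdot>\<^sub>m star n n id \<rho>1 + complex_of_real (1-p) \<cdot>\<^sub>m star n n id \<rho>2"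
      if "density n \<rho>1" "density n \<rho>2" "0 \<le> p" "p \<le> 1" for \<rho>1 \<rho>2 p
      by (rule star_mixture[OF AE S n n channel_id that])
    show "star n n id \<sigma> \<in> carrier_mat (n*n) (n*n)" if "density n \<sigma>" for \<sigma>
      by (rule state_over_time_functionD(1)[OF S n n channel_id that])
  qed
  define c where "c k = Re (herm_coord n \<rho> k)" for k
  have coord: "herm_coord n \<rho> k = complex_of_real (c k)" if "k \<in> index_pairs n" for k
    using herm_coord_real[OF density_hermitian[OF \<rho>] that] unfolding c_def by (simp add: complex_eq_iff)
  have "\<rho> = mat_comb n (index_pairs n) (herm_coord n \<rho>) (herm_basis n)"
    by (rule mat_comb_herm_basis[OF density_carrier[OF \<rho>]])
  also have "\<dots> = mat_comb n (index_pairs n) (\<lambda>k. complex_of_real (c k)) (herm_basis n)"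
    by (rule mat_comb_cong) (simp_all add: coord)
  finally have expand: "\<rho> = mat_comb n (index_pairs n) (\<lambda>k. complex_of_real (c k)) (herm_basis n)" .
  have "complex_of_real (sum c (index_pairs n)) = (\<Sum>k\<in>index_pairs n. herm_coord n \<rho> k)"
    unfolding of_real_sum by (rule sum.cong) (simp_all add: coord)
  also have "\<dots> = 1"
    using sum_herm_coord[OF density_carrier[OF \<rho>]] \<rho> unfolding density_def by simp
  finally have sum_c: "sum c (index_pairs n) = 1" by (metis of_real_eq_1_iff)
  have "star n n id \<rho>
      = mat_comb (n*n) (index_pairs n) (\<lambda>k. complex_of_real (c k)) (\<lambda>k. star n n id (herm_basis n k))"
    by (rule affine_comb[OF finite_index_pairs _ sum_c \<rho> expand]) (simp add: density_herm_basis)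
  also have "\<dots> = id_star_lin star n \<rho>"
    unfolding id_star_lin_def by (rule mat_comb_cong) (simp_all add: coord)
  finally show ?thesis ..
qed

lemma star_id_eq_form:
  assumes S: "state_over_time_function star" and AE: "axiom_E_with star ext"
    and n: "n > 0" and \<rho>: "density n \<rho>"
  shows "star n n id \<rho> = id_star_form n (Xi_of star n) \<rho>"
  unfolding id_star_form_eq Xi_of_def id_star_lin_density[OF S AE n \<rho>]
  using state_over_time_functionD(1)[OF S n n channel_id \<rho>] by (intro eq_matI) auto

lemma Xi_of_one:
  assumes S: "state_over_time_function star" and AE: "axiom_E_with star ext"
    and J: "axiom_Jhat star" and n: "n > 0"
  shows "Xi_of star n (1\<^sub>m n) = 0\<^sub>m (n*n) (n*n)"
proof -
  define \<pi> where "\<pi> = (1 / of_nat n) \<cdot>\<^sub>m (1\<^sub>m n :: cmat)"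
  have "id_star_lin star n \<pi> = (1 / of_nat n) \<cdot>\<^sub>m app2 n n n id (swap_op n)"
    using id_star_lin_density[OF S AE n density_maximally_mixed[OF n]] J n channel_id
    unfolding axiom_Jhat_def \<pi>_def by simp
  also have "\<dots> = id_star_base n \<pi>"
    unfolding \<pi>_def id_star_base_maximally_mixed[OF n] by (simp add: app2_id)
  finally have "Xi_of star n \<pi> = 0\<^sub>m (n*n) (n*n)"
    unfolding Xi_of_def by (intro eq_matI) auto
  moreover have "1\<^sub>m n = of_nat n \<cdot>\<^sub>m \<pi>" unfolding \<pi>_def using n by (intro eq_matI) auto
  ultimately show ?thesis
    using linear_onD(3)[OF linear_on_Xi_of, of "\<pi>" n star "of_nat n"] unfolding \<pi>_def by simp
qed

lemma ptr_id_star_lin: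
  assumes S: "state_over_time_function star" and n: "n > 0" and X: "X \<in> carrier_mat n n"
  shows "ptr1 n n (id_star_lin star n X) = X" "ptr2 n n (id_star_lin star n X) = X"
proof -
  have star_basis: "\<And>k. k \<in> index_pairs n \<Longrightarrow> star n n id (herm_basis n k) \<in> carrier_mat (n*n) (n*n)"
    "\<And>k. k \<in> index_pairs n \<Longrightarrow> ptr1 n n (star n n id (herm_basis n k)) = herm_basis n k"
    "\<And>k. k \<in> index_pairs n \<Longrightarrow> ptr2 n n (star n n id (herm_basis n k)) = herm_basis n k"
    using state_over_time_functionD[OF S n n channel_id density_herm_basis] by auto
  show "ptr1 n n (id_star_lin star n X) = X" "ptr2 n n (id_star_lin star n X) = X"
    unfolding id_star_lin_def
    by (simp_all add: linear_on_mat_comb[OF linear_on_ptr1] linear_on_mat_comb[OF linear_on_ptr2]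
        star_basis mat_comb_herm_basis[OF X, symmetric] mat_comb_cong[OF refl star_basis(2)]
        mat_comb_cong[OF refl star_basis(3)])
qed

lemma ptr_Xi_of:
  assumes S: "state_over_time_function star" and n: "n > 0" and X: "X \<in> carrier_mat n n"
  shows "ptr1 n n (Xi_of star n X) = 0\<^sub>m n n" "ptr2 n n (Xi_of star n X) = 0\<^sub>m n n"
  unfolding Xi_of_def
  using X by (simp_all add: linear_on_diff[OF linear_on_ptr1] linear_on_diff[OF linear_on_ptr2]
      ptr_id_star_lin[OF S n X] ptr1_id_star_base[OF n X] ptr2_id_star_base[OF n X]
      linear_onD(1)[OF linear_on_id_star_lin])

lemma Xi_of_swap_invariant:
  assumes S: "state_over_time_function star" and T: "axiom_T star" and n: "n > 0"
    and X: "X \<in> carrier_mat n n"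
  shows "swap_op n * Xi_of star n X * swap_op n = Xi_of star n X"
proof -
  have basis: "reorder n n (star n n id (herm_basis n k)) = star n n id (herm_basis n k)"
    if "k \<in> index_pairs n" for k
    using T n density_herm_basis[OF that] swap_op_conj state_over_time_functionD(1)[OF S n n channel_id]
    unfolding axiom_T_def by metis
  have lin: "reorder n n (id_star_lin star n X) = id_star_lin star n X"
    unfolding id_star_lin_def
    using state_over_time_functionD(1)[OF S n n channel_id density_herm_basis]
    by (simp add: linear_on_mat_comb[OF linear_on_reorder] mat_comb_cong[OF refl basis])
  have "swap_op n * Xi_of star n X * swap_op n = reorder n n (Xi_of star n X)"
    by (rule swap_op_conj[OF linear_onD(1)[OF linear_on_Xi_of X]])
  also have "\<dots> = reorder n n (id_star_lin star n X) - reorder n n (id_star_base n X)"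
    unfolding Xi_of_def using linear_onD(1)[OF linear_on_id_star_lin X]
    by (intro linear_on_diff[OF linear_on_reorder]) simp_all
  finally show ?thesis unfolding lin reorder_id_star_base Xi_of_def .
qed

lemma Xi_of_hermitian_preserving:
  assumes S: "state_over_time_function star" and H: "axiom_H star" and n: "n > 0"
  shows "hermitian_preserving n (n*n) (Xi_of star n)"
  unfolding hermitian_preserving_def
proof (intro allI impI)
  fix X assume X: "hermitian n X"
  have "hermitian (n*n) (id_star_lin star n X)"
    unfolding id_star_lin_def
  proof (rule hermitian_mat_comb)
    fix k assume k: "k \<in> index_pairs n"
    show "hermitian (n*n) (star n n id (herm_basis n k))"
      using H n density_herm_basis[OF k] channel_id unfolding axiom_H_def by blast
    show "cnj (herm_coord n X k) = herm_coord n X k"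
      using herm_coord_real[OF X k] by (simp add: complex_eq_iff)
  qed
  then show "hermitian (n*n) (Xi_of star n X)"
    unfolding Xi_of_def by (rule hermitian_diff[OF _ hermitian_id_star_base[OF X]])
qed

text \<open>Axiom (P) for \<open>E \<circ> id\<close>, with the partial trace evaluated by (E).\<close>
lemma star_eq_app2_star_id:
  assumes AE: "axiom_E_with star ext" and AP: "axiom_P_with star ext"
    and n: "n > 0" and m: "m > 0" and E: "channel n m E" and \<rho>: "density n \<rho>"
  shows "star n m E \<rho> = app2 n n m E (star n n id \<rho>)"
proof -
  define Z where "Z = reorder n n (star n n id \<rho>)"
  have "qsst star n n Z" unfolding qsst_def Z_def using \<rho> channel_id by blast
  then have "ptr1 n (m*n) (ext n m n E Z) = app1 n m n E Z"
    by (rule axiom_E_withD(4)[OF AE n m E n])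
  moreover have "reorder m n (ptr1 n (m*n) (ext n m n E Z)) = star n m (E \<circ> id) \<rho>"
    using AP n m E \<rho> channel_id unfolding axiom_P_with_def Z_def by blast
  ultimately show ?thesis unfolding Z_def by (simp add: reorder_app1)
qed

lemma axioms_imp_form:
  assumes S: "state_over_time_function star" and EP: "axiom_EP star" and J: "axiom_Jhat star"
  shows "Xi_basic (Xi_of star)" and "induced_by star (Xi_of star)"
proof -
  obtain ext where AE: "axiom_E_with star ext" and AP: "axiom_P_with star ext"
    using EP unfolding axiom_EP_def by blast
  show "Xi_basic (Xi_of star)"
    unfolding Xi_basic_def using linear_on_Xi_of Xi_of_one[OF S AE J] ptr_Xi_of[OF S] by blast
  show "induced_by star (Xi_of star)"
    unfolding induced_by_def
    using star_id_eq_form[OF S AE] star_eq_app2_star_id[OF AE AP] by blast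
qed


section \<open>From the characterising form to the axioms\<close>

definition form_star :: "(nat \<Rightarrow> cmap) \<Rightarrow> nat \<Rightarrow> nat \<Rightarrow> cmap \<Rightarrow> cmap" where
  "form_star \<Xi> n m E Y = app2 n n m E (id_star_form n (\<Xi> n) Y)"

definition form_ext :: "(nat \<Rightarrow> cmap) \<Rightarrow> nat \<Rightarrow> nat \<Rightarrow> nat \<Rightarrow> cmap \<Rightarrow> cmat \<Rightarrow> cmat" where
  "form_ext \<Xi> n m e E X = app1 n (n*m) e (form_star \<Xi> n m E) X"

lemma Xi_basicD:
  assumes "Xi_basic \<Xi>" "n > 0"
  shows "linear_on n (n*n) (\<Xi> n)" "\<Xi> n (1\<^sub>m n) = 0\<^sub>m (n*n) (n*n)"
    "X \<in> carrier_mat n n \<Longrightarrow> ptr1 n n (\<Xi> n X) = 0\<^sub>m n n"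
  using assms unfolding Xi_basic_def by blast+

lemma linear_on_id_star_form: "Xi_basic \<Xi> \<Longrightarrow> n > 0 \<Longrightarrow> linear_on n (n*n) (id_star_form n (\<Xi> n))"
  unfolding id_star_form_eq by (rule linear_on_add[OF linear_on_id_star_base Xi_basicD(1)])

lemma ptr1_id_star_form:
  assumes "Xi_basic \<Xi>" "n > 0" "Y \<in> carrier_mat n n"
  shows "ptr1 n n (id_star_form n (\<Xi> n) Y) = Y"
  using assms linear_onD(1)[OF Xi_basicD(1)[OF assms(1,2)] assms(3)]
  by (simp add: id_star_form_eq linear_onD(2)[OF linear_on_ptr1] ptr1_id_star_base Xi_basicD(3))

lemma linear_on_form_star: "Xi_basic \<Xi> \<Longrightarrow> n > 0 \<Longrightarrow> linear_on n m E \<Longrightarrow> linear_on n (n*m) (form_star \<Xi> n m E)"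
  unfolding form_star_def[abs_def] by (rule linear_on_app2_comp[OF linear_on_id_star_form])

lemma ptr1_form_star:
  assumes "Xi_basic \<Xi>" "n > 0" "linear_on n m E" "Y \<in> carrier_mat n n"
  shows "ptr1 n m (form_star \<Xi> n m E Y) = E Y"
  unfolding form_star_def ptr1_app2[OF assms(3)] ptr1_id_star_form[OF assms(1,2,4)] ..

lemma star_eq_form_star:
  assumes "induced_by star \<Xi>" "n > 0" "m > 0" "channel n m E" "density n \<rho>"
  shows "star n m E \<rho> = form_star \<Xi> n m E \<rho>"
  using assms unfolding induced_by_def form_star_def by simp

lemma axiom_E_with_form_ext:
  assumes S: "state_over_time_function star" and \<Xi>: "Xi_basic \<Xi>" and ind: "induced_by star \<Xi>"
  shows "axiom_E_with star (form_ext \<Xi>)"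
  unfolding axiom_E_with_def
proof (intro conjI allI impI)
  fix n m E \<rho> assume nm: "n > 0" "m > 0" and E\<rho>: "channel n m E \<and> density n \<rho>"
  then show "form_ext \<Xi> n m 1 E \<rho> = star n m E \<rho>"
    unfolding form_ext_def star_eq_form_star[OF ind nm E\<rho>[THEN conjunct1] E\<rho>[THEN conjunct2]]
    by (intro app1_one) (auto simp: density_carrier form_star_def)
next
  fix n m e E X assume nme: "n > 0" "m > 0" "e > 0" and EX: "channel n m E \<and> qsst star n e X"
  have E: "linear_on n m E" using EX channel_linear by blast
  have X: "X \<in> carrier_mat (n*e) (n*e)"
    using EX nme state_over_time_functionD(1)[OF S] unfolding qsst_def
    by (auto dest: density_carrier simp: reorder_def)
  show "form_ext \<Xi> n m e E X \<in> carrier_mat (n*m*e) (n*m*e)"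
    by (simp add: form_ext_def)
  show "app2 (n*m) e e' I (form_ext \<Xi> n m e E X) = form_ext \<Xi> n m e' E (app2 n e e' I X)"
    if "e' > 0" "cp_tni e e' I" for e' I
    using that unfolding form_ext_def cp_tni_def
    by (intro app2_app1_comm[OF linear_on_form_star[OF \<Xi> nme(1) E] _ X]) blast
  show "ptr1 n (m*e) (form_ext \<Xi> n m e E X) = app1 n m e E X"
    unfolding form_ext_def ptr1_app1
    by (rule app1_cong) (rule ptr1_form_star[OF \<Xi> nme(1) E])
qed

lemma axiom_P_with_form_ext:
  assumes \<Xi>: "Xi_basic \<Xi>" and ind: "induced_by star \<Xi>"
  shows "axiom_P_with star (form_ext \<Xi>)"
  unfolding axiom_P_with_def
proof (intro allI impI)
  fix n m k E F \<rho> assume nmk: "n > 0" "m > 0" "k > 0"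
    and EF\<rho>: "channel n m E \<and> channel m k F \<and> density n \<rho>"
  have E: "channel n m E" and F: "channel m k F" and \<rho>: "density n \<rho>" using EF\<rho> by auto
  have "ptr1 m (k*n) (form_ext \<Xi> m k n F (reorder n m (star n m E \<rho>)))
      = app1 m k n F (reorder n m (star n m E \<rho>))"
    unfolding form_ext_def ptr1_app1
    by (rule app1_cong) (rule ptr1_form_star[OF \<Xi> nmk(2) channel_linear[OF F]])
  then have "reorder k n (ptr1 m (k*n) (form_ext \<Xi> m k n F (reorder n m (star n m E \<rho>))))
      = app2 n m k F (star n m E \<rho>)"
    by (simp add: reorder_app1)
  also have "\<dots> = star n k (F \<circ> E) \<rho>"
    using linear_onD(1)[OF channel_linear[OF E]]
    by (simp add: star_eq_form_star[OF ind nmk(1,2) E \<rho>]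
        star_eq_form_star[OF ind nmk(1,3) channel_comp[OF E F] \<rho>]
        form_star_def app2_comp)
  finally show "reorder k n (ptr1 m (k*n) (form_ext \<Xi> m k n F (reorder n m (star n m E \<rho>))))
      = star n k (F \<circ> E) \<rho>" .
qed

lemma axiom_Jhat_of_form:
  assumes \<Xi>: "Xi_basic \<Xi>" and ind: "induced_by star \<Xi>"
  shows "axiom_Jhat star"
  unfolding axiom_Jhat_def
proof (intro allI impI)
  fix n m E assume n: "n > 0" and m: "m > 0" and E: "channel n m E"
  have "\<Xi> n ((1 / of_nat n) \<cdot>\<^sub>m 1\<^sub>m n) = 0\<^sub>m (n*n) (n*n)"
    using Xi_basicD[OF \<Xi> n] by (simp add: linear_onD(3))
  then have "id_star_form n (\<Xi> n) ((1 / of_nat n) \<cdot>\<^sub>m 1\<^sub>m n) = (1 / of_nat n) \<cdot>\<^sub>m swap_op n"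
    unfolding id_star_form_eq id_star_base_maximally_mixed[OF n] by (intro eq_matI) auto
  then show "star n m E ((1 / of_nat n) \<cdot>\<^sub>m 1\<^sub>m n) = (1 / of_nat n) \<cdot>\<^sub>m app2 n n m E (swap_op n)"
    using star_eq_form_star[OF ind n m E density_maximally_mixed[OF n]]
    by (simp add: form_star_def linear_onD(3)[OF linear_on_app2[OF channel_linear[OF E]]])
qed

lemma axiom_T_of_form:
  assumes \<Xi>: "Xi_basic \<Xi>" and ind: "induced_by star \<Xi>"
    and swap: "\<forall>n>0. \<forall>X\<in>carrier_mat n n. swap_op n * \<Xi> n X * swap_op n = \<Xi> n X"
  shows "axiom_T star"
  unfolding axiom_T_def
proof (intro allI impI)
  fix n \<rho> assume n: "n > 0" and \<rho>: "density n \<rho>"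
  have \<Xi>\<rho>: "\<Xi> n \<rho> \<in> carrier_mat (n*n) (n*n)"
    using linear_onD(1)[OF Xi_basicD(1)[OF \<Xi> n] density_carrier[OF \<rho>]] .
  have "reorder n n (\<Xi> n \<rho>) = \<Xi> n \<rho>"
    using swap n density_carrier[OF \<rho>] swap_op_conj[OF \<Xi>\<rho>] by metis
  moreover have "star n n id \<rho> = id_star_base n \<rho> + \<Xi> n \<rho>"
    using ind n \<rho> unfolding induced_by_def id_star_form_eq by blast
  ultimately show "swap_op n * star n n id \<rho> * swap_op n = star n n id \<rho>"
    using \<Xi>\<rho> by (simp add: swap_op_conj linear_onD(2)[OF linear_on_reorder] reorder_id_star_base)
qed

lemma axiom_H_of_form:
  assumes ind: "induced_by star \<Xi>" and herm: "\<forall>n>0. hermitian_preserving n (n*n) (\<Xi> n)"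
  shows "axiom_H star"
  unfolding axiom_H_def
proof (intro allI impI)
  fix n m E \<rho> assume n: "n > 0" and m: "m > 0" and E\<rho>: "channel n m E \<and> density n \<rho>"
  have "hermitian (n*n) (id_star_form n (\<Xi> n) \<rho>)"
    unfolding id_star_form_eq using E\<rho> herm n density_hermitian
    by (intro hermitian_add hermitian_id_star_base) (auto simp: hermitian_preserving_def)
  then show "hermitian (n*m) (star n m E \<rho>)"
    using E\<rho> n m app2_hermitian star_eq_form_star[OF ind n m] unfolding form_star_def channel_def by auto
qed

theorem proposition8:
  fixes star :: sotf
  assumes "state_over_time_function star"
  shows "((axiom_T star \<and> axiom_EP star \<and> axiom_Jhat star) \<longleftrightarrow>
           (\<exists>\<Xi>. Xi_basic \<Xi> \<and>
              (\<forall>n>0. \<forall>X\<in>carrier_mat n n.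
                 swap_op n * \<Xi> n X * swap_op n = \<Xi> n X) \<and>
              induced_by star \<Xi>)) \<and>
         ((axiom_H star \<and> axiom_EP star \<and> axiom_Jhat star) \<longleftrightarrow>
           (\<exists>\<Xi>. Xi_basic \<Xi> \<and>
              (\<forall>n>0. hermitian_preserving n (n*n) (\<Xi> n)) \<and>
              induced_by star \<Xi>))"
proof -
  note S = assms
  have form_imp: "axiom_EP star \<and> axiom_Jhat star" if "Xi_basic \<Xi>" "induced_by star \<Xi>" for \<Xi>
    using axiom_E_with_form_ext[OF S that] axiom_P_with_form_ext[OF that] axiom_Jhat_of_form[OF that]
    unfolding axiom_EP_def by blast
  have imp_form: "Xi_basic (Xi_of star) \<and> induced_by star (Xi_of star)"
    if "axiom_EP star" "axiom_Jhat star"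
    using axioms_imp_form[OF S that] by blast
  have swap: "\<forall>n>0. \<forall>X\<in>carrier_mat n n. swap_op n * Xi_of star n X * swap_op n = Xi_of star n X"
    if "axiom_T star"
    using Xi_of_swap_invariant[OF S that] by blast
  have herm: "\<forall>n>0. hermitian_preserving n (n*n) (Xi_of star n)" if "axiom_H star"
    using Xi_of_hermitian_preserving[OF S that] by blast
  show ?thesis
    using form_imp imp_form swap herm axiom_T_of_form axiom_H_of_form by meson
qed

end
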